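(* Let $(X,\rho)$ be a complete separable metric space satisfying the strict triangle inequality $\rho(x,y)<\rho(x,z)+\rho(z,y)$ for all $x,y,z\in X$ with $z\notin\{x,y\}$. If $\Phi\colon\mathcal{W}_1(X)\to\mathcal{W}_1(X)$ is an isometry (distance preserving bijection), then there exists an isometry $\psi$ of $X$ such that $\Phi(\mu)=\psi_\#\mu$ for all $\mu\in\mathcal{W}_1(X)$.
   Context: $\mathcal{W}_1(X)$ is the set of Borel probability measures $\mu$ on $X$ with $\int_X\rho(x,\hat x)\,d\mu(x)<\infty$ for some $\hat x\in X$, with $d_{\mathcal{W}_1}(\mu,\nu)=\inf_{\pi\in\Pi(\mu,\nu)}\int_{X\times X}\rho(x,y)\,d\pi(x,y)$, $\Pi(\mu,\nu)$ being the set of Borel probability measures on $X\times X$ with marginals $\mu,\nu$. The push-forward is $(g_\#\mu)(A)=\mu(g^{-1}[A])$. *)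

theory Defs
  imports "HOL-Probability.Probability"
begin

text \<open>The metric space (X, rho) is the type 'a with its metric dist; complete separable
  is the class polish_space (complete + second countable, i.e. separable for metric spaces).\<close>

definition W1 :: "('a::metric_space) measure set" where
  "W1 = {\<mu>. sets \<mu> = sets (borel :: 'a measure) \<and> prob_space \<mu> \<and>
              (\<exists>x0. (\<integral>\<^sup>+ x. ennreal (dist x x0) \<partial>\<mu>) < \<infinity>)}"

definition couplings :: "('a::metric_space) measure \<Rightarrow> 'a measure \<Rightarrow> ('a \<times> 'a) measure set" where
  "couplings \<mu> \<nu> = {\<pi>. sets \<pi> = sets (borel :: ('a \<times> 'a) measure) \<and> prob_space \<pi> \<and>
        distr \<pi> borel fst = \<mu> \<and> distr \<pi> borel snd = \<nu>}"

definition W1_dist :: "('a::metric_space) measure \<Rightarrow> 'a measure \<Rightarrow> ennreal" where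
  "W1_dist \<mu> \<nu> = (INF \<pi>\<in>couplings \<mu> \<nu>. \<integral>\<^sup>+ p. ennreal (dist (fst p) (snd p)) \<partial>\<pi>)"

definition W1_isometry :: "(('a::metric_space) measure \<Rightarrow> 'a measure) \<Rightarrow> bool" where
  "W1_isometry \<Phi> \<longleftrightarrow> bij_betw \<Phi> W1 W1 \<and>
     (\<forall>\<mu>\<in>W1. \<forall>\<nu>\<in>W1. W1_dist (\<Phi> \<mu>) (\<Phi> \<nu>) = W1_dist \<mu> \<nu>)"

definition isometry :: "(('a::metric_space) \<Rightarrow> 'a) \<Rightarrow> bool" where
  "isometry \<psi> \<longleftrightarrow> bij \<psi> \<and> (\<forall>x y. dist (\<psi> x) (\<psi> y) = dist x y)"

end

theory Submission
  imports Defs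
begin

(* A Dirac mass is recognised metrically inside W1: under the strict triangle inequality it is
   exactly a measure that lies between no two other measures, whereas a measure charging a Borel
   set A with 0 < mu A < 1 is a mixture of its two conditional measures and lies on the segment
   between them.  Hence Phi maps Dirac masses to Dirac masses, which defines an isometry psi of
   the space with Phi (delta x) = delta (psi x); and since W1 (delta b, nu) is the mean distance
   of nu to b, Phi preserves mean distances to points.
   For finitely supported measures, Phi eta = psi# eta follows by induction on the size of the
   support: moving the atom of eta at a onto b is a transport that lowers the mean distance to b
   by exactly its cost, and by the strict triangle inequality a transport of this kind cannot
   put mass on any point other than b that was not already there.  Finitely supported measures
   are dense in W1, so Phi mu and psi# mu have the same integrals against all 1-Lipschitz
   functions, and these integrals determine the measure. *)

section \<open>Finitely supported probability measures\<close>

lemma integral_finite_support: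
  fixes M :: "'a::t1_space measure" and f :: "'a \<Rightarrow> real"
  assumes "finite_measure M" and sets: "sets M = sets borel"
    and S: "finite S" "emeasure M (- S) = 0" and [measurable]: "f \<in> borel_measurable borel"
  shows "(\<integral>x. f x \<partial>M) = (\<Sum>z\<in>S. f z * measure M {z})"
proof -
  interpret finite_measure M by fact
  have [measurable_cong]: "sets M = sets borel" by fact
  have "- S \<in> null_sets M"
    using S sets by (simp add: null_sets_def borel_closed finite_imp_closed)
  then have "AE x in M. x \<in> S"
    by (rule AE_I') auto
  then have "AE x in M. f x = (\<Sum>z\<in>S. f z * indicator {z} x)"
  proof eventually_elim
    case (elim x)
    then have "(\<Sum>z\<in>S. f z * indicator {z} x) = (\<Sum>z\<in>{x}. f z * indicator {z} x)"
      using S(1) by (intro sum.mono_neutral_right) auto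
    then show ?case by simp
  qed
  then have "(\<integral>x. f x \<partial>M) = (\<integral>x. (\<Sum>z\<in>S. f z * indicator {z} x) \<partial>M)"
    by (intro integral_cong_AE) measurable
  also have "\<dots> = (\<Sum>z\<in>S. (\<integral>x. f z * indicator {z} x \<partial>M))"
    using sets by (intro Bochner_Integration.integral_sum integrable_mult_right integrable_real_indicator)
      (simp_all add: emeasure_eq_measure)
  also have "\<dots> = (\<Sum>z\<in>S. f z * measure M {z})"
    using sets by simp
  finally show ?thesis .
qed

lemma measure_finite_support:
  fixes M :: "'a::t1_space measure"
  assumes "finite_measure M" "sets M = sets borel" "finite S" "emeasure M (- S) = 0"
    and B: "B \<in> sets borel"
  shows "measure M B = (\<Sum>z\<in>S \<inter> B. measure M {z})"
proof -
  have [measurable]: "B \<in> sets borel" by fact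
  have "measure M B = (\<integral>x. indicator B x \<partial>M)"
    using assms(2) B by simp
  also have "\<dots> = (\<Sum>z\<in>S. indicator B z * measure M {z})"
    using assms(1-4) by (rule integral_finite_support) measurable
  also have "\<dots> = (\<Sum>z\<in>S \<inter> B. measure M {z})"
    using assms(3) by (simp add: sum.inter_restrict indicator_def if_distrib)
  finally show ?thesis .
qed

lemma prob_space_eqI_finite_support:
  fixes M N :: "'a::t1_space measure"
  assumes M: "prob_space M" "sets M = sets borel" and N: "prob_space N" "sets N = sets borel"
    and S: "finite S" "emeasure M (- S) = 0"
    and le: "\<And>z. z \<in> S \<Longrightarrow> emeasure M {z} \<le> emeasure N {z}"
  shows "M = N"
proof -
  interpret M: prob_space M by fact
  interpret N: prob_space N by fact
  have le': "measure M {z} \<le> measure N {z}" if "z \<in> S" for z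
    using le[OF that] by (simp add: M.emeasure_eq_measure N.emeasure_eq_measure)
  have "(\<Sum>z\<in>S. measure M {z}) = 1"
    using measure_finite_support[OF M.finite_measure_axioms M(2) S, of UNIV] sets_eq_imp_space_eq[OF M(2)]
    by (simp add: M.prob_space[symmetric])
  moreover have N_S: "measure N S = (\<Sum>z\<in>S. measure N {z})"
    using S(1) N(2) by (intro measure_eq_sum_singleton) auto
  moreover have "(\<Sum>z\<in>S. measure M {z}) \<le> (\<Sum>z\<in>S. measure N {z})"
    using le' by (rule sum_mono)
  ultimately have sums: "(\<Sum>z\<in>S. measure M {z}) = (\<Sum>z\<in>S. measure N {z})"
    using N.prob_le_1[of S] by linarith
  have eq: "measure M {z} = measure N {z}" if "z \<in> S" for z
    using sums le' that S(1) by (rule sum_mono_inv)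
  have "emeasure N (- S) = 0"
  proof -
    have "measure N S = 1"
      using N_S eq \<open>(\<Sum>z\<in>S. measure M {z}) = 1\<close> by simp
    then have "measure N (space N - S) = 0"
      using S(1) N(2) by (subst N.prob_compl) (simp_all add: borel_closed finite_imp_closed)
    then show ?thesis
      using sets_eq_imp_space_eq[OF N(2)] by (simp add: N.emeasure_eq_measure Compl_eq_Diff_UNIV)
  qed
  show ?thesis
  proof (rule measure_eqI)
    fix B assume "B \<in> sets M"
    then have "measure M B = measure N B"
      using measure_finite_support[OF M.finite_measure_axioms M(2) S, of B]
        measure_finite_support[OF N.finite_measure_axioms N(2) S(1) \<open>emeasure N (- S) = 0\<close>, of B]
        eq M(2) by simp
    then show "emeasure M B = emeasure N B"
      by (simp add: M.emeasure_eq_measure N.emeasure_eq_measure)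
  qed (simp add: M N)
qed

lemma integral_dist_two_point:
  fixes M :: "'a::polish_space measure"
  assumes "finite_measure M" "sets M = sets borel" "emeasure M (- {a, b}) = 0"
  shows "(\<integral>w. dist a w \<partial>M) = dist a b * measure M {b}"
proof -
  have "(\<lambda>w. dist a w) \<in> borel_measurable borel"
    by measurable
  then show ?thesis
    using integral_finite_support[OF assms(1,2) _ assms(3)] by (cases "a = b") simp_all
qed

lemma return_borel_eq_iff [simp]:
  "return borel x = return borel y \<longleftrightarrow> x = (y::'a::t1_space)"
proof
  assume "return borel x = return borel y"
  then have "emeasure (return borel x) {x} = emeasure (return borel y) {x}"
    by simp
  then show "x = y"
    by (simp add: indicator_def split: if_splits)
qed simp

lemma prob_space_eq_return:
  fixes M :: "'a::t1_space measure"
  assumes "prob_space M" "sets M = sets borel" "emeasure M (- {x}) = 0"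
  shows "M = return borel x"
  using assms prob_space.emeasure_le_1[OF assms(1)]
  by (intro prob_space_eqI_finite_support[of M "return borel x" "{x}"]) (auto intro: prob_space_return)

section \<open>Mixtures of measures\<close>

definition mix_measure :: "real \<Rightarrow> 'a measure \<Rightarrow> 'a measure \<Rightarrow> 'a measure" where
  "mix_measure s M N =
     measure_of (space M) (sets M) (\<lambda>A. ennreal s * emeasure M A + ennreal (1 - s) * emeasure N A)"

lemma sets_mix_measure [simp]: "sets (mix_measure s M N) = sets M"
  by (simp add: mix_measure_def)

lemma space_mix_measure [simp]: "space (mix_measure s M N) = space M"
  by (simp add: mix_measure_def)

lemma emeasure_mix_measure:
  assumes "sets N = sets M"
  shows "emeasure (mix_measure s M N) A = ennreal s * emeasure M A + ennreal (1 - s) * emeasure N A"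
proof (cases "A \<in> sets M")
  case True
  have "countably_additive (sets M) (\<lambda>A. ennreal s * emeasure M A + ennreal (1 - s) * emeasure N A)"
  proof (rule countably_additiveI)
    fix A :: "nat \<Rightarrow> _" assume "range A \<subseteq> sets M" "disjoint_family A"
    then show "(\<Sum>i. ennreal s * emeasure M (A i) + ennreal (1 - s) * emeasure N (A i))
        = ennreal s * emeasure M (\<Union>i. A i) + ennreal (1 - s) * emeasure N (\<Union>i. A i)"
      using assms by (simp add: suminf_add[symmetric] ennreal_suminf_cmult suminf_emeasure)
  qed
  then show ?thesis
    unfolding mix_measure_def using True
    by (intro emeasure_measure_of_sigma) (auto simp: positive_def sets.sigma_algebra_axioms)
next
  case False
  then show ?thesis
    using assms by (simp add: emeasure_notin_sets)
qed

lemma nn_integral_mix_measure: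
  assumes sets: "sets N = sets M" and f: "f \<in> borel_measurable M"
  shows "(\<integral>\<^sup>+x. f x \<partial>mix_measure s M N) = ennreal s * (\<integral>\<^sup>+x. f x \<partial>M) + ennreal (1 - s) * (\<integral>\<^sup>+x. f x \<partial>N)"
  using f
proof induction
  case (cong f g)
  then show ?case
    using sets_eq_imp_space_eq[OF sets] by (simp cong: nn_integral_cong_simp)
next
  case (set A)
  then show ?case
    using sets by (simp add: emeasure_mix_measure)
next
  case (mult f c)
  then show ?case
    using sets by (simp add: nn_integral_cmult ac_simps distrib_left
      measurable_cong_sets[OF sets_mix_measure refl] measurable_cong_sets[OF sets refl])
next
  case (add f g)
  then show ?case
    using sets by (simp add: nn_integral_add ac_simps distrib_left
      measurable_cong_sets[OF sets_mix_measure refl] measurable_cong_sets[OF sets refl])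
next
  case (seq U)
  have [measurable]: "U i \<in> borel_measurable N" for i
    using seq(1) sets by (simp add: measurable_cong_sets[OF sets refl])
  have mono: "incseq (\<lambda>i. \<integral>\<^sup>+x. U i x \<partial>K)" for K
    using \<open>incseq U\<close> by (auto simp: incseq_def le_fun_def intro!: nn_integral_mono)
  have "(\<integral>\<^sup>+x. (SUP i. U i) x \<partial>mix_measure s M N) = (SUP i. \<integral>\<^sup>+x. U i x \<partial>mix_measure s M N)"
    using seq by (simp add: nn_integral_monotone_convergence_SUP image_comp
      measurable_cong_sets[OF sets_mix_measure refl])
  also have "\<dots> = (SUP i. ennreal s * (\<integral>\<^sup>+x. U i x \<partial>M) + ennreal (1 - s) * (\<integral>\<^sup>+x. U i x \<partial>N))"
    using seq by simp
  also have "\<dots> = (SUP i. ennreal s * (\<integral>\<^sup>+x. U i x \<partial>M)) + (SUP i. ennreal (1 - s) * (\<integral>\<^sup>+x. U i x \<partial>N))"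
    using mono by (intro ennreal_SUP_add) (auto simp: incseq_def intro: mult_left_mono)
  also have "\<dots> = ennreal s * (SUP i. \<integral>\<^sup>+x. U i x \<partial>M) + ennreal (1 - s) * (SUP i. \<integral>\<^sup>+x. U i x \<partial>N)"
    by (simp add: SUP_mult_left_ennreal)
  also have "\<dots> = ennreal s * (\<integral>\<^sup>+x. (SUP i. U i) x \<partial>M) + ennreal (1 - s) * (\<integral>\<^sup>+x. (SUP i. U i) x \<partial>N)"
    using seq by (simp add: nn_integral_monotone_convergence_SUP image_comp)
  finally show ?case .
qed

lemma mix_measure_self:
  assumes "0 \<le> s" "s \<le> 1"
  shows "mix_measure s M M = M"
proof (rule measure_eqI)
  have "ennreal s + ennreal (1 - s) = 1"
    using assms by (simp flip: ennreal_plus)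
  then show "emeasure (mix_measure s M M) A = emeasure M A" for A
    by (simp add: emeasure_mix_measure flip: distrib_right)
qed simp

lemma mix_measure_commute:
  assumes "sets N = sets M"
  shows "mix_measure s M N = mix_measure (1 - s) N M"
  using assms sets_eq_imp_space_eq[OF assms]
  by (intro measure_eqI) (simp_all add: emeasure_mix_measure add.commute)

lemma prob_space_mix_measure:
  assumes "prob_space M" "prob_space N" "sets N = sets M" "0 \<le> s" "s \<le> 1"
  shows "prob_space (mix_measure s M N)"
proof (rule prob_spaceI)
  have "ennreal s + ennreal (1 - s) = 1"
    using assms by (simp flip: ennreal_plus)
  moreover have "emeasure M (space M) = 1" "emeasure N (space M) = 1"
    using prob_space.emeasure_space_1 assms(1,2) sets_eq_imp_space_eq[OF assms(3)] by metis+
  ultimately show "emeasure (mix_measure s M N) (space (mix_measure s M N)) = 1"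
    using assms(3) by (simp add: emeasure_mix_measure)
qed

lemma distr_mix_measure:
  assumes "sets N = sets M" "f \<in> measurable M K"
  shows "distr (mix_measure s M N) K f = mix_measure s (distr M K f) (distr N K f)"
proof (rule measure_eqI)
  fix A assume "A \<in> sets (distr (mix_measure s M N) K f)"
  then have "A \<in> sets K" by simp
  moreover have "f \<in> measurable N K" "f \<in> measurable (mix_measure s M N) K"
    using assms(2) unfolding measurable_cong_sets[OF assms(1) refl]
      measurable_cong_sets[OF sets_mix_measure refl] by simp_all
  ultimately show "emeasure (distr (mix_measure s M N) K f) A = emeasure (mix_measure s (distr M K f) (distr N K f)) A"
    using assms sets_eq_imp_space_eq[OF assms(1)] by (simp add: emeasure_distr emeasure_mix_measure)
qed simp

section \<open>Couplings and the Wasserstein distance\<close>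

lemma W1D:
  assumes "\<mu> \<in> W1"
  shows "sets \<mu> = sets borel" "space \<mu> = UNIV" "prob_space \<mu>"
  using assms unfolding W1_def by (auto dest: sets_eq_imp_space_eq)

lemma nn_integral_dist_W1_finite:
  fixes \<mu> :: "'a::polish_space measure"
  assumes "\<mu> \<in> W1"
  shows "(\<integral>\<^sup>+x. ennreal (dist x y) \<partial>\<mu>) < \<infinity>"
proof -
  obtain x0 where x0: "(\<integral>\<^sup>+x. ennreal (dist x x0) \<partial>\<mu>) < \<infinity>"
    using assms unfolding W1_def by auto
  interpret prob_space \<mu> using W1D[OF assms] by simp
  have [measurable_cong]: "sets \<mu> = sets borel" using W1D[OF assms] by simp
  have "(\<integral>\<^sup>+x. ennreal (dist x y) \<partial>\<mu>) \<le> (\<integral>\<^sup>+x. ennreal (dist x x0) + ennreal (dist x0 y) \<partial>\<mu>)"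
    by (intro nn_integral_mono) (simp flip: ennreal_plus add: dist_triangle)
  also have "\<dots> = (\<integral>\<^sup>+x. ennreal (dist x x0) \<partial>\<mu>) + ennreal (dist x0 y)"
    by (subst nn_integral_add) (measurable, simp add: emeasure_space_1)
  finally show ?thesis
    using x0 by (simp add: order_le_less_trans)
qed

lemma integrable_dist_W1:
  fixes \<mu> :: "'a::polish_space measure"
  assumes "\<mu> \<in> W1"
  shows "integrable \<mu> (\<lambda>x. dist x y)" "integrable \<mu> (\<lambda>x. dist y x)"
proof -
  have [measurable_cong]: "sets \<mu> = sets borel" using W1D[OF assms] by simp
  show "integrable \<mu> (\<lambda>x. dist x y)"
    by (intro integrableI_bounded) (measurable, use nn_integral_dist_W1_finite[OF assms] in simp)
  then show "integrable \<mu> (\<lambda>x. dist y x)"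
    by (simp add: dist_commute)
qed

lemma nn_integral_dist_W1:
  fixes \<mu> :: "'a::polish_space measure"
  assumes "\<mu> \<in> W1"
  shows "(\<integral>\<^sup>+x. ennreal (dist y x) \<partial>\<mu>) = ennreal (\<integral>x. dist y x \<partial>\<mu>)"
  using integrable_dist_W1[OF assms] by (intro nn_integral_eq_integral) auto

lemma borel_measurable_lipschitz:
  "C-lipschitz_on UNIV f \<Longrightarrow> f \<in> borel_measurable borel"
  by (intro borel_measurable_continuous_onI lipschitz_on_continuous_on)

lemma integrable_lipschitz_W1:
  fixes f :: "'a::polish_space \<Rightarrow> real"
  assumes \<mu>: "\<mu> \<in> W1" and f: "C-lipschitz_on UNIV f"
  shows "integrable \<mu> f"
proof -
  fix y :: 'a
  interpret prob_space \<mu> using W1D[OF \<mu>] by simp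
  have [measurable_cong]: "sets \<mu> = sets borel" using W1D[OF \<mu>] by simp
  have [measurable]: "f \<in> borel_measurable borel" using borel_measurable_lipschitz[OF f] .
  have bound: "integrable \<mu> (\<lambda>x. \<bar>f y\<bar> + C * dist x y)"
    using integrable_dist_W1(1)[OF \<mu>, of y] by simp
  have "norm (f x) \<le> norm (\<bar>f y\<bar> + C * dist x y)" for x
    using lipschitz_onD[OF f, of x y] lipschitz_on_nonneg[OF f] by (simp add: dist_real_def)
  then show ?thesis
    by (intro Bochner_Integration.integrable_bound[OF bound] AE_I2) measurable
qed

lemma distr_in_W1:
  fixes \<mu> :: "'a::polish_space measure" and g :: "'a \<Rightarrow> 'b::polish_space"
  assumes \<mu>: "\<mu> \<in> W1" and g: "g \<in> borel_measurable borel"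
    and bound: "\<And>x. dist (g x) y \<le> dist x y' + C"
  shows "distr \<mu> borel g \<in> W1"
proof -
  interpret prob_space \<mu> using W1D[OF \<mu>] by simp
  have [measurable_cong]: "sets \<mu> = sets borel" using W1D[OF \<mu>] by simp
  have [measurable]: "g \<in> borel_measurable borel" by fact
  have "(\<integral>\<^sup>+x. ennreal (dist x y) \<partial>distr \<mu> borel g) = (\<integral>\<^sup>+x. ennreal (dist (g x) y) \<partial>\<mu>)"
    by (intro nn_integral_distr) measurable
  also have "\<dots> \<le> (\<integral>\<^sup>+x. ennreal (dist x y') + ennreal \<bar>C\<bar> \<partial>\<mu>)"
  proof (intro nn_integral_mono)
    fix x
    have "dist (g x) y \<le> dist x y' + \<bar>C\<bar>"
      using bound[of x] by linarith
    then show "ennreal (dist (g x) y) \<le> ennreal (dist x y') + ennreal \<bar>C\<bar>"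
      by (simp flip: ennreal_plus add: ennreal_leI)
  qed
  also have "\<dots> = (\<integral>\<^sup>+x. ennreal (dist x y') \<partial>\<mu>) + ennreal \<bar>C\<bar>"
    by (subst nn_integral_add) (measurable, simp add: emeasure_space_1)
  also have "\<dots> < \<infinity>"
    using nn_integral_dist_W1_finite[OF \<mu>] by simp
  finally show ?thesis
    unfolding W1_def using g by (auto intro!: prob_space_distr)
qed

lemma return_in_W1: "return borel (x::'a::polish_space) \<in> W1"
proof -
  have "(\<integral>\<^sup>+y. ennreal (dist y x) \<partial>return borel x) = 0"
    by (subst nn_integral_return) auto
  then show ?thesis
    unfolding W1_def by (auto intro!: prob_space_return exI[of _ x])
qed

lemma couplingsD:
  fixes \<pi> :: "('a::polish_space \<times> 'a) measure"
  assumes "\<pi> \<in> couplings \<mu> \<nu>"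
  shows "sets \<pi> = sets (borel \<Otimes>\<^sub>M borel)" "space \<pi> = UNIV" "prob_space \<pi>"
    "distr \<pi> borel fst = \<mu>" "distr \<pi> borel snd = \<nu>"
proof -
  have "sets \<pi> = sets borel" "prob_space \<pi>" "distr \<pi> borel fst = \<mu>" "distr \<pi> borel snd = \<nu>"
    using assms unfolding couplings_def by auto
  then show "sets \<pi> = sets (borel \<Otimes>\<^sub>M borel)" "space \<pi> = UNIV" "prob_space \<pi>"
    "distr \<pi> borel fst = \<mu>" "distr \<pi> borel snd = \<nu>"
    by (simp_all only: borel_prod sets_eq_imp_space_eq space_borel)
qed

lemma
  fixes f :: "'a::polish_space \<Rightarrow> real"
  assumes \<pi>: "\<pi> \<in> couplings \<mu> \<nu>" and [measurable]: "f \<in> borel_measurable borel"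
  shows integral_coupling_fst: "(\<integral>p. f (fst p) \<partial>\<pi>) = (\<integral>x. f x \<partial>\<mu>)"
    and integral_coupling_snd: "(\<integral>p. f (snd p) \<partial>\<pi>) = (\<integral>x. f x \<partial>\<nu>)"
    and integrable_coupling_fst_iff: "integrable \<pi> (\<lambda>p. f (fst p)) \<longleftrightarrow> integrable \<mu> f"
    and integrable_coupling_snd_iff: "integrable \<pi> (\<lambda>p. f (snd p)) \<longleftrightarrow> integrable \<nu> f"
proof -
  have [measurable_cong]: "sets \<pi> = sets (borel \<Otimes>\<^sub>M borel)" using couplingsD(1)[OF \<pi>] .
  show "(\<integral>p. f (fst p) \<partial>\<pi>) = (\<integral>x. f x \<partial>\<mu>)" "integrable \<pi> (\<lambda>p. f (fst p)) \<longleftrightarrow> integrable \<mu> f"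
    using integral_distr[of fst \<pi> borel f] integrable_distr_eq[of fst \<pi> borel f] couplingsD(4)[OF \<pi>]
    by simp_all
  show "(\<integral>p. f (snd p) \<partial>\<pi>) = (\<integral>x. f x \<partial>\<nu>)" "integrable \<pi> (\<lambda>p. f (snd p)) \<longleftrightarrow> integrable \<nu> f"
    using integral_distr[of snd \<pi> borel f] integrable_distr_eq[of snd \<pi> borel f] couplingsD(5)[OF \<pi>]
    by simp_all
qed

lemma nn_integral_coupling_snd:
  fixes f :: "'a::polish_space \<Rightarrow> ennreal"
  assumes \<pi>: "\<pi> \<in> couplings \<mu> \<nu>" and [measurable]: "f \<in> borel_measurable borel"
  shows "(\<integral>\<^sup>+p. f (snd p) \<partial>\<pi>) = (\<integral>\<^sup>+x. f x \<partial>\<nu>)"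
proof -
  have [measurable_cong]: "sets \<pi> = sets (borel \<Otimes>\<^sub>M borel)" using couplingsD(1)[OF \<pi>] .
  have "(\<integral>\<^sup>+p. f (snd p) \<partial>\<pi>) = (\<integral>\<^sup>+x. f x \<partial>distr \<pi> borel snd)"
    by (rule nn_integral_distr[symmetric]) measurable
  then show ?thesis
    using couplingsD(5)[OF \<pi>] by simp
qed

lemma integrable_dist_coupling:
  fixes \<pi> :: "('a::polish_space \<times> 'a) measure"
  assumes \<pi>: "\<pi> \<in> couplings \<mu> \<nu>" and "\<mu> \<in> W1" "\<nu> \<in> W1"
  shows "integrable \<pi> (\<lambda>p. dist (fst p) (snd p))"
proof -
  fix y :: 'a
  have [measurable_cong]: "sets \<pi> = sets (borel \<Otimes>\<^sub>M borel)" using couplingsD(1)[OF \<pi>] .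
  have "(\<lambda>x. dist x y) \<in> borel_measurable borel" "(\<lambda>x. dist y x) \<in> borel_measurable borel"
    by measurable
  then have "integrable \<pi> (\<lambda>p. dist (fst p) y)" "integrable \<pi> (\<lambda>p. dist y (snd p))"
    using integrable_coupling_fst_iff[OF \<pi>] integrable_coupling_snd_iff[OF \<pi>]
      integrable_dist_W1 assms(2,3) by blast+
  then show ?thesis
    by (rule Bochner_Integration.integrable_bound[OF Bochner_Integration.integrable_add])
       (auto intro: dist_triangle)
qed

lemma
  fixes \<pi> :: "('a::polish_space \<times> 'a) measure"
  assumes \<pi>: "\<pi> \<in> couplings \<mu> \<nu>" and \<mu>: "\<mu> \<in> W1" and \<nu>: "\<nu> \<in> W1"
  shows integrable_dist_coupling_fst: "integrable \<pi> (\<lambda>p. dist b (fst p))"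
    and integrable_dist_coupling_snd: "integrable \<pi> (\<lambda>p. dist b (snd p))"
    and integral_dist_coupling_fst: "(\<integral>p. dist b (fst p) \<partial>\<pi>) = (\<integral>x. dist b x \<partial>\<mu>)"
    and integral_dist_coupling_snd: "(\<integral>p. dist b (snd p) \<partial>\<pi>) = (\<integral>x. dist b x \<partial>\<nu>)"
proof -
  have meas: "(\<lambda>x. dist b x) \<in> borel_measurable borel"
    by measurable
  show "integrable \<pi> (\<lambda>p. dist b (fst p))" "integrable \<pi> (\<lambda>p. dist b (snd p))"
    using integrable_coupling_fst_iff[OF \<pi> meas] integrable_coupling_snd_iff[OF \<pi> meas]
      integrable_dist_W1(2) \<mu> \<nu> by blast+
  show "(\<integral>p. dist b (fst p) \<partial>\<pi>) = (\<integral>x. dist b x \<partial>\<mu>)" "(\<integral>p. dist b (snd p) \<partial>\<pi>) = (\<integral>x. dist b x \<partial>\<nu>)"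
    using integral_coupling_fst[OF \<pi> meas] integral_coupling_snd[OF \<pi> meas] by simp_all
qed

lemma nn_integral_dist_coupling:
  fixes \<pi> :: "('a::polish_space \<times> 'a) measure"
  assumes "\<pi> \<in> couplings \<mu> \<nu>" "\<mu> \<in> W1" "\<nu> \<in> W1"
  shows "(\<integral>\<^sup>+p. ennreal (dist (fst p) (snd p)) \<partial>\<pi>) = ennreal (\<integral>p. dist (fst p) (snd p) \<partial>\<pi>)"
  using integrable_dist_coupling[OF assms] by (intro nn_integral_eq_integral) auto

lemma W1_dist_le_coupling:
  "\<pi> \<in> couplings \<mu> \<nu> \<Longrightarrow> W1_dist \<mu> \<nu> \<le> (\<integral>\<^sup>+p. ennreal (dist (fst p) (snd p)) \<partial>\<pi>)"
  unfolding W1_dist_def by (rule INF_lower)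

lemma borel_measurable_fst_snd_borel [measurable]:
  "fst \<in> borel_measurable (borel :: ('a::second_countable_topology \<times> 'b::second_countable_topology) measure)"
  "snd \<in> borel_measurable (borel :: ('a::second_countable_topology \<times> 'b::second_countable_topology) measure)"
  by (simp_all add: borel_prod[symmetric])

lemma graph_coupling:
  fixes \<mu> :: "'a::polish_space measure"
  assumes \<mu>: "\<mu> \<in> W1" and [measurable]: "g \<in> borel_measurable borel"
  shows "distr \<mu> borel (\<lambda>x. (x, g x)) \<in> couplings \<mu> (distr \<mu> borel g)"
    and "(\<integral>\<^sup>+p. ennreal (dist (fst p) (snd p)) \<partial>distr \<mu> borel (\<lambda>x. (x, g x)))
         = (\<integral>\<^sup>+x. ennreal (dist x (g x)) \<partial>\<mu>)"
proof -
  have [measurable_cong]: "sets \<mu> = sets borel" using W1D[OF \<mu>] by simp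
  have [measurable]: "(\<lambda>x. (x, g x)) \<in> measurable \<mu> (borel :: ('a \<times> 'a) measure)"
    unfolding borel_prod[symmetric] by measurable
  have "distr (distr \<mu> borel (\<lambda>x. (x, g x))) borel fst = \<mu>"
    by (subst distr_distr) (simp_all add: comp_def distr_id2 W1D[OF \<mu>])
  moreover have "distr (distr \<mu> borel (\<lambda>x. (x, g x))) borel snd = distr \<mu> borel g"
    by (subst distr_distr) (simp_all add: comp_def)
  ultimately show "distr \<mu> borel (\<lambda>x. (x, g x)) \<in> couplings \<mu> (distr \<mu> borel g)"
    using W1D(3)[OF \<mu>] unfolding couplings_def by (auto intro: prob_space.prob_space_distr)
  show "(\<integral>\<^sup>+p. ennreal (dist (fst p) (snd p)) \<partial>distr \<mu> borel (\<lambda>x. (x, g x)))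
      = (\<integral>\<^sup>+x. ennreal (dist x (g x)) \<partial>\<mu>)"
    by (subst nn_integral_distr) (simp_all add: borel_prod[symmetric])
qed

lemma W1_dist_distr_le:
  fixes \<mu> :: "'a::polish_space measure"
  assumes "\<mu> \<in> W1" "g \<in> borel_measurable borel"
  shows "W1_dist \<mu> (distr \<mu> borel g) \<le> (\<integral>\<^sup>+x. ennreal (dist x (g x)) \<partial>\<mu>)"
  using W1_dist_le_coupling[OF graph_coupling(1)[OF assms]] graph_coupling(2)[OF assms] by simp

lemma swap_coupling:
  fixes \<pi> :: "('a::polish_space \<times> 'a) measure"
  assumes \<pi>: "\<pi> \<in> couplings \<mu> \<nu>"
  shows "distr \<pi> borel prod.swap \<in> couplings \<nu> \<mu>"
    and "(\<integral>\<^sup>+p. ennreal (dist (fst p) (snd p)) \<partial>distr \<pi> borel prod.swap)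
         = (\<integral>\<^sup>+p. ennreal (dist (fst p) (snd p)) \<partial>\<pi>)"
proof -
  have [measurable_cong]: "sets \<pi> = sets (borel \<Otimes>\<^sub>M borel)" using couplingsD(1)[OF \<pi>] .
  have [measurable]: "prod.swap \<in> measurable \<pi> (borel :: ('a \<times> 'a) measure)"
    using measurable_pair_swap' unfolding borel_prod[symmetric] measurable_cong_sets[OF couplingsD(1)[OF \<pi>] refl]
    by (simp add: prod.swap_def[abs_def] case_prod_beta')
  have "distr (distr \<pi> borel prod.swap) borel fst = \<nu>" "distr (distr \<pi> borel prod.swap) borel snd = \<mu>"
    using couplingsD(4,5)[OF \<pi>] by (subst distr_distr; simp add: comp_def)+
  then show "distr \<pi> borel prod.swap \<in> couplings \<nu> \<mu>"
    using couplingsD(3)[OF \<pi>] unfolding couplings_def by (auto intro: prob_space.prob_space_distr)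
  show "(\<integral>\<^sup>+p. ennreal (dist (fst p) (snd p)) \<partial>distr \<pi> borel prod.swap)
      = (\<integral>\<^sup>+p. ennreal (dist (fst p) (snd p)) \<partial>\<pi>)"
    by (subst nn_integral_distr) (measurable, simp add: dist_commute)
qed

lemma W1_dist_commute:
  fixes \<mu> :: "'a::polish_space measure"
  shows "W1_dist \<mu> \<nu> = W1_dist \<nu> \<mu>"
proof -
  have "W1_dist \<nu> \<mu> \<le> W1_dist \<mu> \<nu>" for \<mu> \<nu> :: "'a measure"
    unfolding W1_dist_def[of \<mu>]
  proof (rule INF_greatest)
    fix \<pi> assume \<pi>: "\<pi> \<in> couplings \<mu> \<nu>"
    show "W1_dist \<nu> \<mu> \<le> (\<integral>\<^sup>+p. ennreal (dist (fst p) (snd p)) \<partial>\<pi>)"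
      using W1_dist_le_coupling[OF swap_coupling(1)[OF \<pi>]] swap_coupling(2)[OF \<pi>] by simp
  qed
  from this[of \<mu> \<nu>] this[of \<nu> \<mu>] show ?thesis
    by (rule antisym)
qed

lemma pair_measure_coupling:
  fixes \<mu> :: "'a::polish_space measure"
  assumes \<mu>: "\<mu> \<in> W1" and \<nu>: "\<nu> \<in> W1"
  shows "\<mu> \<Otimes>\<^sub>M \<nu> \<in> couplings \<mu> \<nu>"
proof -
  interpret \<mu>: prob_space \<mu> using W1D[OF \<mu>] by simp
  interpret \<nu>: prob_space \<nu> using W1D[OF \<nu>] by simp
  have "sets (\<mu> \<Otimes>\<^sub>M \<nu>) = sets (borel \<Otimes>\<^sub>M borel)"
    by (rule sets_pair_measure_cong) (simp_all add: W1D[OF \<mu>] W1D[OF \<nu>])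
  then have "sets (\<mu> \<Otimes>\<^sub>M \<nu>) = sets (borel :: ('a \<times> 'a) measure)"
    by (simp only: borel_prod)
  moreover have "distr (\<mu> \<Otimes>\<^sub>M \<nu>) borel fst = \<mu>"
  proof -
    have "distr (\<mu> \<Otimes>\<^sub>M \<nu>) borel fst = distr (\<mu> \<Otimes>\<^sub>M \<nu>) \<mu> fst"
      by (rule distr_cong) (simp_all add: W1D[OF \<mu>])
    then show ?thesis by (simp add: \<nu>.distr_pair_fst)
  qed
  moreover have "distr (\<mu> \<Otimes>\<^sub>M \<nu>) borel snd = \<nu>"
  proof (rule measure_eqI)
    fix A assume "A \<in> sets (distr (\<mu> \<Otimes>\<^sub>M \<nu>) borel snd)"
    then have A: "A \<in> sets \<nu>" using W1D[OF \<nu>] by simp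
    have "snd \<in> measurable (\<mu> \<Otimes>\<^sub>M \<nu>) borel"
      using measurable_snd[of \<mu> \<nu>] unfolding measurable_cong_sets[OF refl W1D(1)[OF \<nu>]] .
    moreover have "snd -` A \<inter> space (\<mu> \<Otimes>\<^sub>M \<nu>) = space \<mu> \<times> A"
      using sets.sets_into_space[OF A] by (auto simp: space_pair_measure)
    ultimately show "emeasure (distr (\<mu> \<Otimes>\<^sub>M \<nu>) borel snd) A = emeasure \<nu> A"
      using A W1D[OF \<nu>] by (simp add: emeasure_distr \<nu>.emeasure_pair_measure_Times \<mu>.emeasure_space_1)
  qed (simp add: W1D[OF \<nu>])
  ultimately show ?thesis
    unfolding couplings_def by (simp add: prob_space_pair \<mu>.prob_space_axioms \<nu>.prob_space_axioms)
qed

lemma W1_dist_return: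
  fixes \<nu> :: "'a::polish_space measure"
  assumes \<nu>: "\<nu> \<in> W1"
  shows "W1_dist (return borel x) \<nu> = ennreal (\<integral>y. dist x y \<partial>\<nu>)"
proof -
  have cost: "(\<integral>\<^sup>+p. ennreal (dist (fst p) (snd p)) \<partial>\<pi>) = (\<integral>\<^sup>+y. ennreal (dist x y) \<partial>\<nu>)"
    if \<pi>: "\<pi> \<in> couplings (return borel x) \<nu>" for \<pi>
  proof -
    have [measurable_cong]: "sets \<pi> = sets (borel \<Otimes>\<^sub>M borel)" using couplingsD(1)[OF \<pi>] .
    have fst: "fst \<in> measurable \<pi> borel" by measurable
    have "emeasure \<pi> (fst -` (- {x}) \<inter> space \<pi>) = emeasure (return borel x) (- {x})"
      using emeasure_distr[OF fst, of "- {x}"] couplingsD(4)[OF \<pi>] by (simp add: borel_open)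
    then have "fst -` (- {x}) \<inter> space \<pi> \<in> null_sets \<pi>"
      using measurable_sets[OF fst, of "- {x}"] by (simp add: null_sets_def borel_open)
    then have "AE p in \<pi>. fst p = x"
      by (rule AE_I') auto
    then have "(\<integral>\<^sup>+p. ennreal (dist (fst p) (snd p)) \<partial>\<pi>) = (\<integral>\<^sup>+p. ennreal (dist x (snd p)) \<partial>\<pi>)"
      by (intro nn_integral_cong_AE) auto
    also have "\<dots> = (\<integral>\<^sup>+y. ennreal (dist x y) \<partial>\<nu>)"
      using \<pi> by (rule nn_integral_coupling_snd) measurable
    finally show ?thesis .
  qed
  have "W1_dist (return borel x) \<nu> = (INF \<pi>\<in>couplings (return borel x) \<nu>. \<integral>\<^sup>+y. ennreal (dist x y) \<partial>\<nu>)"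
    unfolding W1_dist_def by (rule INF_cong) (simp_all add: cost)
  also have "\<dots> = (\<integral>\<^sup>+y. ennreal (dist x y) \<partial>\<nu>)"
    using pair_measure_coupling[OF return_in_W1 \<nu>] by (intro INF_const) blast
  finally show ?thesis
    using nn_integral_dist_W1[OF \<nu>] by simp
qed

lemma W1_dist_return_return:
  "W1_dist (return borel x) (return borel (y::'a::polish_space)) = ennreal (dist x y)"
proof -
  have "(\<integral>z. dist x z \<partial>return borel y) = dist x y"
    by (rule integral_return) (simp, measurable)
  then show ?thesis
    by (simp add: W1_dist_return return_in_W1)
qed

lemma W1_dist_return_right:
  fixes \<nu> :: "'a::polish_space measure"
  assumes "\<nu> \<in> W1"
  shows "W1_dist \<nu> (return borel x) = ennreal (\<integral>y. dist x y \<partial>\<nu>)"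
  using W1_dist_return[OF assms] W1_dist_commute by metis

lemma lipschitz_on_dist: "1-lipschitz_on U (\<lambda>x. dist b x)"
proof (rule lipschitz_onI)
  fix x y
  show "dist (dist b x) (dist b y) \<le> 1 * dist x y"
    using dist_triangle[of b x y] dist_triangle[of b y x] by (simp add: dist_real_def abs_le_iff dist_commute)
qed simp

lemma integral_lipschitz_diff_le_W1_dist:
  fixes \<mu> :: "'a::polish_space measure"
  assumes \<mu>: "\<mu> \<in> W1" and \<nu>: "\<nu> \<in> W1" and f: "1-lipschitz_on UNIV f"
  shows "ennreal ((\<integral>x. f x \<partial>\<mu>) - (\<integral>x. f x \<partial>\<nu>)) \<le> W1_dist \<mu> \<nu>"
  unfolding W1_dist_def
proof (rule INF_greatest)
  fix \<pi> assume \<pi>: "\<pi> \<in> couplings \<mu> \<nu>"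
  have f_meas: "f \<in> borel_measurable borel" using borel_measurable_lipschitz[OF f] .
  have fst: "integrable \<pi> (\<lambda>p. f (fst p))" and snd: "integrable \<pi> (\<lambda>p. f (snd p))"
    using integrable_lipschitz_W1[OF _ f] \<mu> \<nu>
      integrable_coupling_fst_iff[OF \<pi> f_meas] integrable_coupling_snd_iff[OF \<pi> f_meas] by blast+
  have "(\<integral>x. f x \<partial>\<mu>) - (\<integral>x. f x \<partial>\<nu>) = (\<integral>p. f (fst p) - f (snd p) \<partial>\<pi>)"
    using fst snd by (simp add: integral_coupling_fst[OF \<pi> f_meas] integral_coupling_snd[OF \<pi> f_meas])
  also have "\<dots> \<le> (\<integral>p. dist (fst p) (snd p) \<partial>\<pi>)"
    using lipschitz_onD[OF f] fst snd integrable_dist_coupling[OF \<pi> \<mu> \<nu>]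
    by (intro integral_mono) (auto simp: dist_real_def abs_le_iff)
  finally show "ennreal ((\<integral>x. f x \<partial>\<mu>) - (\<integral>x. f x \<partial>\<nu>)) \<le> (\<integral>\<^sup>+p. ennreal (dist (fst p) (snd p)) \<partial>\<pi>)"
    using nn_integral_dist_coupling[OF \<pi> \<mu> \<nu>] by (simp add: ennreal_leI)
qed

lemma abs_integral_lipschitz_diff_le_W1_dist:
  fixes \<mu> :: "'a::polish_space measure"
  assumes "\<mu> \<in> W1" "\<nu> \<in> W1" "1-lipschitz_on UNIV f"
  shows "ennreal \<bar>(\<integral>x. f x \<partial>\<mu>) - (\<integral>x. f x \<partial>\<nu>)\<bar> \<le> W1_dist \<mu> \<nu>"
  using integral_lipschitz_diff_le_W1_dist[OF assms]
    integral_lipschitz_diff_le_W1_dist[OF assms(2,1) assms(3)] W1_dist_commute[of \<mu> \<nu>]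
  by (cases "(\<integral>x. f x \<partial>\<mu>) \<le> (\<integral>x. f x \<partial>\<nu>)") auto

lemma mix_measure_coupling:
  fixes \<pi> :: "('a::polish_space \<times> 'a) measure"
  assumes \<pi>: "\<pi> \<in> couplings \<alpha> \<beta>" and \<pi>': "\<pi>' \<in> couplings \<alpha>' \<beta>'" and s: "0 \<le> s" "s \<le> 1"
  shows "mix_measure s \<pi> \<pi>' \<in> couplings (mix_measure s \<alpha> \<alpha>') (mix_measure s \<beta> \<beta>')"
    and "(\<integral>\<^sup>+p. ennreal (dist (fst p) (snd p)) \<partial>mix_measure s \<pi> \<pi>') =
           ennreal s * (\<integral>\<^sup>+p. ennreal (dist (fst p) (snd p)) \<partial>\<pi>)
         + ennreal (1 - s) * (\<integral>\<^sup>+p. ennreal (dist (fst p) (snd p)) \<partial>\<pi>')"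
proof -
  have sets: "sets \<pi>' = sets \<pi>"
    using couplingsD(1)[OF \<pi>] couplingsD(1)[OF \<pi>'] by simp
  have [measurable_cong]: "sets \<pi> = sets (borel \<Otimes>\<^sub>M borel)"
    using couplingsD(1)[OF \<pi>] .
  have fst: "fst \<in> measurable \<pi> borel" by measurable
  have snd: "snd \<in> measurable \<pi> borel" by measurable
  have "distr (mix_measure s \<pi> \<pi>') borel fst = mix_measure s \<alpha> \<alpha>'"
    using distr_mix_measure[OF sets fst] couplingsD(4)[OF \<pi>] couplingsD(4)[OF \<pi>'] by simp
  moreover have "distr (mix_measure s \<pi> \<pi>') borel snd = mix_measure s \<beta> \<beta>'"
    using distr_mix_measure[OF sets snd] couplingsD(5)[OF \<pi>] couplingsD(5)[OF \<pi>'] by simp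
  moreover have "prob_space (mix_measure s \<pi> \<pi>')"
    using couplingsD(3)[OF \<pi>] couplingsD(3)[OF \<pi>'] sets s by (rule prob_space_mix_measure)
  ultimately show "mix_measure s \<pi> \<pi>' \<in> couplings (mix_measure s \<alpha> \<alpha>') (mix_measure s \<beta> \<beta>')"
    using \<pi> unfolding couplings_def by simp
  show "(\<integral>\<^sup>+p. ennreal (dist (fst p) (snd p)) \<partial>mix_measure s \<pi> \<pi>') =
           ennreal s * (\<integral>\<^sup>+p. ennreal (dist (fst p) (snd p)) \<partial>\<pi>)
         + ennreal (1 - s) * (\<integral>\<^sup>+p. ennreal (dist (fst p) (snd p)) \<partial>\<pi>')"
    using sets by (rule nn_integral_mix_measure) measurable
qed

lemma ennreal_mult_INF:
  assumes "I \<noteq> {}"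
  shows "ennreal c * (INF i\<in>I. f i) = (INF i\<in>I. ennreal c * f i)"
proof -
  have "continuous_on UNIV (\<lambda>x::ennreal. ennreal c * x)"
    by (intro ennreal_continuous_on_cmult continuous_on_id) simp
  then have "continuous (at_right (INF i\<in>I. f i)) (\<lambda>x. ennreal c * x)"
    by (rule continuous_within_subset[OF continuous_on_interior]) auto
  then show ?thesis
    using continuous_at_Inf_mono[of "\<lambda>x. ennreal c * x" "f ` I"] assms
    by (simp add: mono_def mult_left_mono image_comp)
qed

lemma W1_dist_mix_measure_le:
  fixes \<alpha> :: "'a::polish_space measure"
  assumes "\<alpha> \<in> W1" "\<beta> \<in> W1" "\<kappa> \<in> W1" "0 \<le> s" "s \<le> 1"
  shows "W1_dist (mix_measure s \<alpha> \<kappa>) (mix_measure s \<beta> \<kappa>) \<le> ennreal s * W1_dist \<alpha> \<beta>"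
proof -
  let ?\<Delta> = "distr \<kappa> borel (\<lambda>x. (x, x))"
  have \<Delta>: "?\<Delta> \<in> couplings \<kappa> \<kappa>" "(\<integral>\<^sup>+p. ennreal (dist (fst p) (snd p)) \<partial>?\<Delta>) = 0"
    using graph_coupling[OF assms(3) measurable_id] distr_id2[OF W1D(1)[OF assms(3), symmetric]] by simp_all
  have "W1_dist (mix_measure s \<alpha> \<kappa>) (mix_measure s \<beta> \<kappa>) \<le> ennreal s * (\<integral>\<^sup>+p. ennreal (dist (fst p) (snd p)) \<partial>\<pi>)"
    if "\<pi> \<in> couplings \<alpha> \<beta>" for \<pi>
    using W1_dist_le_coupling[OF mix_measure_coupling(1)[OF that \<Delta>(1) assms(4,5)]]
      mix_measure_coupling(2)[OF that \<Delta>(1) assms(4,5)] \<Delta>(2) by simp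
  then show ?thesis
    using pair_measure_coupling[OF assms(1,2)] unfolding W1_dist_def
    by (subst ennreal_mult_INF) (auto intro: INF_greatest)
qed

lemma W1_dist_mix_measure_between:
  fixes \<nu>1 :: "'a::polish_space measure"
  assumes \<nu>: "\<nu>1 \<in> W1" "\<nu>2 \<in> W1" and a: "0 \<le> a" "a \<le> 1"
  shows "W1_dist \<nu>1 (mix_measure a \<nu>1 \<nu>2) + W1_dist (mix_measure a \<nu>1 \<nu>2) \<nu>2 \<le> W1_dist \<nu>1 \<nu>2"
proof -
  have "W1_dist \<nu>1 (mix_measure a \<nu>1 \<nu>2) \<le> ennreal (1 - a) * W1_dist \<nu>1 \<nu>2"
  proof -
    have "\<nu>1 = mix_measure (1 - a) \<nu>1 \<nu>1"
      using a by (intro mix_measure_self[symmetric]) simp_all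
    moreover have "mix_measure a \<nu>1 \<nu>2 = mix_measure (1 - a) \<nu>2 \<nu>1"
      using W1D(1)[OF \<nu>(1)] W1D(1)[OF \<nu>(2)] by (intro mix_measure_commute) simp
    ultimately show ?thesis
      using W1_dist_mix_measure_le[OF \<nu>(1,2,1), of "1 - a"] a by simp
  qed
  moreover have "W1_dist (mix_measure a \<nu>1 \<nu>2) \<nu>2 \<le> ennreal a * W1_dist \<nu>1 \<nu>2"
  proof -
    have "\<nu>2 = mix_measure a \<nu>2 \<nu>2"
      by (rule mix_measure_self[OF a, symmetric])
    then show ?thesis
      using W1_dist_mix_measure_le[OF \<nu>(1,2,2) a] by simp
  qed
  ultimately have "W1_dist \<nu>1 (mix_measure a \<nu>1 \<nu>2) + W1_dist (mix_measure a \<nu>1 \<nu>2) \<nu>2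
      \<le> (ennreal (1 - a) + ennreal a) * W1_dist \<nu>1 \<nu>2"
    by (simp add: distrib_right add_mono)
  also have "ennreal (1 - a) + ennreal a = 1"
    using a by (simp flip: ennreal_plus)
  finally show ?thesis
    by simp
qed

section \<open>Dirac masses are the measures lying between no two others\<close>

lemma prob_space_zero_one_ball:
  fixes M :: "'a::{metric_space, second_countable_topology} measure"
  assumes "prob_space M" and sets: "sets M = sets borel"
    and zero_one: "\<And>A. A \<in> sets borel \<Longrightarrow> measure M A = 0 \<or> measure M A = 1" and "0 < r"
  obtains c where "measure M (ball c r) = 1"
proof -
  interpret prob_space M by fact
  obtain D :: "'a set" where D: "countable D" "\<And>U. open U \<Longrightarrow> U \<noteq> {} \<Longrightarrow> \<exists>d\<in>D. d \<in> U"
    using countable_dense_exists by blast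
  have "\<exists>d\<in>D. measure M (ball d r) = 1"
  proof (rule ccontr)
    assume "\<not> ?thesis"
    then have null: "ball d r \<in> null_sets M" if "d \<in> D" for d
      using that zero_one[of "ball d r"] sets by (auto simp: emeasure_eq_measure null_sets_def)
    have "(\<Union>d\<in>D. ball d r) \<in> null_sets M"
      by (rule null_sets_UN'[OF D(1) null])
    moreover have "(\<Union>d\<in>D. ball d r) = space M"
      using D(2)[of "ball _ r"] \<open>0 < r\<close> sets_eq_imp_space_eq[OF sets] by (fastforce simp: dist_commute)
    ultimately show False
      using emeasure_space_1 by (simp add: null_sets_def)
  qed
  then show thesis
    using that by blast
qed

lemma prob_space_zero_one_imp_return:
  fixes M :: "'a::{metric_space, second_countable_topology} measure"
  assumes "prob_space M" and sets: "sets M = sets borel"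
    and zero_one: "\<And>A. A \<in> sets borel \<Longrightarrow> measure M A = 0 \<or> measure M A = 1"
  shows "\<exists>x. M = return borel x"
proof -
  interpret prob_space M by fact
  have "\<exists>c. measure M (ball c (inverse (Suc n))) = 1" for n
    using prob_space_zero_one_ball[OF assms, of "inverse (Suc n)"] by auto
  then obtain c where c: "\<And>n. measure M (ball (c n) (inverse (Suc n))) = 1"
    by metis
  have AE: "AE x in M. \<forall>n. x \<in> ball (c n) (inverse (Suc n))"
    unfolding AE_all_countable using AE_prob_1[OF c] by blast
  then obtain x0 where x0: "\<And>n. x0 \<in> ball (c n) (inverse (Suc n))"
    using eventually_happens[OF AE] ae_filter_bot by blast
  from AE have "AE x in M. x = x0"
  proof eventually_elim
    case (elim x)
    have bound: "dist x x0 < 2 * inverse (Suc n)" for n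
    proof -
      have "dist x (c n) < inverse (Suc n)" "dist x0 (c n) < inverse (Suc n)"
        using elim x0[of n] by (auto simp: dist_commute)
      then show ?thesis
        using dist_triangle2[of x x0 "c n"] by linarith
    qed
    show "x = x0"
    proof (rule ccontr)
      assume "x \<noteq> x0"
      then obtain n where "inverse (Suc n) < dist x x0 / 2"
        using reals_Archimedean[of "dist x x0 / 2"] by auto
      then show False
        using bound[of n] by simp
    qed
  qed
  then have "emeasure M (- {x0}) = 0"
    using sets sets_eq_imp_space_eq[OF sets] by (subst (asm) AE_iff_measurable[of "- {x0}"]) (auto simp: borel_open)
  then show ?thesis
    using prob_space_eq_return[OF prob_space_axioms sets] by blast
qed

definition W1_between :: "'a::polish_space measure \<Rightarrow> bool" where
  "W1_between \<mu> \<longleftrightarrow>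
     (\<exists>\<nu>1\<in>W1. \<exists>\<nu>2\<in>W1. \<nu>1 \<noteq> \<mu> \<and> \<nu>2 \<noteq> \<mu> \<and> W1_dist \<nu>1 \<mu> + W1_dist \<mu> \<nu>2 \<le> W1_dist \<nu>1 \<nu>2)"

lemma W1_between_W1_isometry_iff:
  assumes iso: "W1_isometry \<Phi>" and \<mu>: "\<mu> \<in> W1"
  shows "W1_between (\<Phi> \<mu>) \<longleftrightarrow> W1_between \<mu>"
proof -
  have bij: "bij_betw \<Phi> W1 W1"
    and dist: "\<And>\<mu> \<nu>. \<mu> \<in> W1 \<Longrightarrow> \<nu> \<in> W1 \<Longrightarrow> W1_dist (\<Phi> \<mu>) (\<Phi> \<nu>) = W1_dist \<mu> \<nu>"
    using iso unfolding W1_isometry_def by auto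
  have eq_iff: "\<Phi> \<nu> = \<Phi> \<mu> \<longleftrightarrow> \<nu> = \<mu>" if "\<nu> \<in> W1" for \<nu>
    using inj_onD[OF bij_betw_imp_inj_on[OF bij] _ that \<mu>] by blast
  show ?thesis
  proof
    assume "W1_between (\<Phi> \<mu>)"
    then obtain \<nu>1 \<nu>2 where \<nu>: "\<nu>1 \<in> W1" "\<nu>2 \<in> W1" "\<nu>1 \<noteq> \<Phi> \<mu>" "\<nu>2 \<noteq> \<Phi> \<mu>"
      and le: "W1_dist \<nu>1 (\<Phi> \<mu>) + W1_dist (\<Phi> \<mu>) \<nu>2 \<le> W1_dist \<nu>1 \<nu>2"
      unfolding W1_between_def by blast
    have "\<nu>1 \<in> \<Phi> ` W1" "\<nu>2 \<in> \<Phi> ` W1"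
      using \<nu>(1,2) bij_betw_imp_surj_on[OF bij] by simp_all
    then obtain \<kappa>1 \<kappa>2 where \<kappa>: "\<kappa>1 \<in> W1" "\<kappa>2 \<in> W1" "\<nu>1 = \<Phi> \<kappa>1" "\<nu>2 = \<Phi> \<kappa>2"
      by (elim imageE)
    show "W1_between \<mu>"
      unfolding W1_between_def
      using \<kappa> \<nu>(3,4) le eq_iff by (intro bexI[of _ \<kappa>1] bexI[of _ \<kappa>2]) (auto simp: dist \<mu>)
  next
    assume "W1_between \<mu>"
    then obtain \<nu>1 \<nu>2 where \<nu>: "\<nu>1 \<in> W1" "\<nu>2 \<in> W1" "\<nu>1 \<noteq> \<mu>" "\<nu>2 \<noteq> \<mu>"
      and le: "W1_dist \<nu>1 \<mu> + W1_dist \<mu> \<nu>2 \<le> W1_dist \<nu>1 \<nu>2"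
      unfolding W1_between_def by blast
    show "W1_between (\<Phi> \<mu>)"
      unfolding W1_between_def
      using \<nu> le eq_iff bij_betw_apply[OF bij]
      by (intro bexI[of _ "\<Phi> \<nu>1"] bexI[of _ "\<Phi> \<nu>2"]) (auto simp: dist \<mu>)
  qed
qed

lemma pair_measure_AE_eq_imp_return:
  fixes \<nu>1 :: "'a::polish_space measure"
  assumes \<nu>1: "\<nu>1 \<in> W1" and \<nu>2: "\<nu>2 \<in> W1" and AE: "AE p in \<nu>1 \<Otimes>\<^sub>M \<nu>2. fst p = x \<or> snd p = x"
  shows "\<nu>1 = return borel x \<or> \<nu>2 = return borel x"
proof -
  interpret \<nu>2: prob_space \<nu>2 using W1D[OF \<nu>2] by simp
  have x: "- {x} \<in> sets \<nu>1" "- {x} \<in> sets \<nu>2"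
    using W1D(1)[OF \<nu>1] W1D(1)[OF \<nu>2] by (simp_all add: borel_open)
  have "{p \<in> space (\<nu>1 \<Otimes>\<^sub>M \<nu>2). \<not> (fst p = x \<or> snd p = x)} = (- {x}) \<times> (- {x})"
    using W1D(2)[OF \<nu>1] W1D(2)[OF \<nu>2] by (auto simp: space_pair_measure)
  then have "emeasure (\<nu>1 \<Otimes>\<^sub>M \<nu>2) ((- {x}) \<times> (- {x})) = 0"
    using AE x by (subst AE_iff_measurable[symmetric]) auto
  then have "emeasure \<nu>1 (- {x}) = 0 \<or> emeasure \<nu>2 (- {x}) = 0"
    using x by (simp add: \<nu>2.emeasure_pair_measure_Times)
  then show ?thesis
    using prob_space_eq_return W1D \<nu>1 \<nu>2 by blast
qed

lemma AE_dist_eq_if_W1_dist_through_return: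
  fixes \<nu>1 :: "'a::polish_space measure"
  assumes \<nu>1: "\<nu>1 \<in> W1" and \<nu>2: "\<nu>2 \<in> W1"
    and le: "W1_dist \<nu>1 (return borel x) + W1_dist (return borel x) \<nu>2 \<le> W1_dist \<nu>1 \<nu>2"
  shows "AE p in \<nu>1 \<Otimes>\<^sub>M \<nu>2. dist (fst p) (snd p) = dist (fst p) x + dist x (snd p)"
proof -
  let ?\<pi> = "\<nu>1 \<Otimes>\<^sub>M \<nu>2"
  have \<pi>: "?\<pi> \<in> couplings \<nu>1 \<nu>2"
    using \<nu>1 \<nu>2 by (rule pair_measure_coupling)
  note integrable = integrable_dist_coupling_fst[OF \<pi> \<nu>1 \<nu>2] integrable_dist_coupling_snd[OF \<pi> \<nu>1 \<nu>2]
    integrable_dist_coupling[OF \<pi> \<nu>1 \<nu>2]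
  define g where "g p = dist x (fst p) + dist x (snd p) - dist (fst p) (snd p)" for p
  have g_nonneg: "0 \<le> g p" for p
    unfolding g_def using dist_triangle3[of "fst p" "snd p" x] by (simp add: dist_commute)
  have "ennreal ((\<integral>y. dist x y \<partial>\<nu>1) + (\<integral>y. dist x y \<partial>\<nu>2)) \<le> W1_dist \<nu>1 \<nu>2"
    using le by (simp add: W1_dist_return \<nu>2 W1_dist_return_right \<nu>1 integral_nonneg)
  also have "\<dots> \<le> ennreal (\<integral>p. dist (fst p) (snd p) \<partial>?\<pi>)"
    using W1_dist_le_coupling[OF \<pi>] nn_integral_dist_coupling[OF \<pi> \<nu>1 \<nu>2] by simp
  finally have "(\<integral>y. dist x y \<partial>\<nu>1) + (\<integral>y. dist x y \<partial>\<nu>2) \<le> (\<integral>p. dist (fst p) (snd p) \<partial>?\<pi>)"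
    by (subst (asm) ennreal_le_iff) (simp_all add: integral_nonneg)
  then have "(\<integral>p. g p \<partial>?\<pi>) \<le> 0"
    unfolding g_def using integrable
    by (simp add: integral_dist_coupling_fst[OF \<pi> \<nu>1 \<nu>2] integral_dist_coupling_snd[OF \<pi> \<nu>1 \<nu>2])
  moreover have "0 \<le> (\<integral>p. g p \<partial>?\<pi>)"
    using g_nonneg by simp
  moreover have "integrable ?\<pi> g"
    unfolding g_def using integrable by auto
  ultimately have "AE p in ?\<pi>. g p = 0"
    using integral_nonneg_eq_0_iff_AE g_nonneg by (metis AE_I2 order_antisym)
  then show ?thesis
    by eventually_elim (simp add: g_def dist_commute)
qed

lemma return_not_W1_between:
  fixes x :: "'a::polish_space"
  assumes strict: "\<And>x y z::'a. z \<noteq> x \<Longrightarrow> z \<noteq> y \<Longrightarrow> dist x y < dist x z + dist z y"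
  shows "\<not> W1_between (return borel x)"
proof
  assume "W1_between (return borel x)"
  then obtain \<nu>1 \<nu>2 where \<nu>1: "\<nu>1 \<in> W1" and \<nu>2: "\<nu>2 \<in> W1"
    and ne: "\<nu>1 \<noteq> return borel x" "\<nu>2 \<noteq> return borel x"
    and le: "W1_dist \<nu>1 (return borel x) + W1_dist (return borel x) \<nu>2 \<le> W1_dist \<nu>1 \<nu>2"
    unfolding W1_between_def by blast
  from AE_dist_eq_if_W1_dist_through_return[OF \<nu>1 \<nu>2 le]
  have "AE p in \<nu>1 \<Otimes>\<^sub>M \<nu>2. fst p = x \<or> snd p = x"
  proof eventually_elim
    case (elim p)
    then show ?case
      using strict[of x "fst p" "snd p"] by auto
  qed
  then show False
    using pair_measure_AE_eq_imp_return[OF \<nu>1 \<nu>2] ne by blast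
qed

definition cond_measure :: "'a measure \<Rightarrow> 'a set \<Rightarrow> 'a measure" where
  "cond_measure \<mu> A = density \<mu> (\<lambda>x. ennreal (1 / measure \<mu> A) * indicator A x)"

lemma sets_cond_measure [simp]: "sets (cond_measure \<mu> A) = sets \<mu>"
  by (simp add: cond_measure_def)

lemma
  fixes \<mu> :: "'a::polish_space measure"
  assumes \<mu>: "\<mu> \<in> W1" and A: "A \<in> sets borel" and pos: "0 < measure \<mu> A"
  shows cond_measure_in_W1: "cond_measure \<mu> A \<in> W1"
    and emeasure_cond_measure:
      "B \<in> sets borel \<Longrightarrow> emeasure (cond_measure \<mu> A) B = ennreal (1 / measure \<mu> A) * emeasure \<mu> (A \<inter> B)"
proof -
  interpret prob_space \<mu> using W1D[OF \<mu>] by simp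
  have [measurable_cong]: "sets \<mu> = sets borel" using W1D[OF \<mu>] by simp
  have [measurable]: "A \<in> sets borel" by fact
  show emeasure: "emeasure (cond_measure \<mu> A) B = ennreal (1 / measure \<mu> A) * emeasure \<mu> (A \<inter> B)"
    if "B \<in> sets borel" for B
  proof -
    have [measurable]: "B \<in> sets borel" by fact
    have "emeasure (cond_measure \<mu> A) B = (\<integral>\<^sup>+x. ennreal (1 / measure \<mu> A) * indicator (A \<inter> B) x \<partial>\<mu>)"
      unfolding cond_measure_def
      by (subst emeasure_density) (measurable, simp add: indicator_inter_arith mult.assoc)
    also have "\<dots> = ennreal (1 / measure \<mu> A) * emeasure \<mu> (A \<inter> B)"
      by (rule nn_integral_cmult_indicator) measurable
    finally show ?thesis .
  qed
  have "emeasure (cond_measure \<mu> A) (space (cond_measure \<mu> A)) = 1"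
    using emeasure[of UNIV] pos W1D[OF \<mu>]
    by (simp add: emeasure_eq_measure cond_measure_def flip: ennreal_mult)
  then have "prob_space (cond_measure \<mu> A)"
    by (rule prob_spaceI)
  fix y :: 'a
  have "(\<integral>\<^sup>+x. ennreal (dist x y) \<partial>cond_measure \<mu> A)
      = (\<integral>\<^sup>+x. ennreal (1 / measure \<mu> A) * indicator A x * ennreal (dist x y) \<partial>\<mu>)"
    unfolding cond_measure_def by (rule nn_integral_density) measurable
  also have "\<dots> \<le> (\<integral>\<^sup>+x. ennreal (1 / measure \<mu> A) * ennreal (dist x y) \<partial>\<mu>)"
    by (intro nn_integral_mono) (simp add: indicator_def)
  also have "\<dots> = ennreal (1 / measure \<mu> A) * (\<integral>\<^sup>+x. ennreal (dist x y) \<partial>\<mu>)"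
    by (rule nn_integral_cmult) measurable
  also have "\<dots> < \<infinity>"
    using nn_integral_dist_W1_finite[OF \<mu>] by (simp add: ennreal_mult_less_top)
  finally show "cond_measure \<mu> A \<in> W1"
    unfolding W1_def using \<open>prob_space (cond_measure \<mu> A)\<close> W1D(1)[OF \<mu>] by (auto simp: cond_measure_def)
qed

lemma mix_measure_cond_measure:
  fixes \<mu> :: "'a::polish_space measure"
  assumes \<mu>: "\<mu> \<in> W1" and A: "A \<in> sets borel" and a: "0 < measure \<mu> A" "measure \<mu> A < 1"
  shows "\<mu> = mix_measure (measure \<mu> A) (cond_measure \<mu> A) (cond_measure \<mu> (- A))"
proof (rule measure_eqI)
  interpret prob_space \<mu> using W1D[OF \<mu>] by simp
  have compl: "measure \<mu> (- A) = 1 - measure \<mu> A"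
    using A prob_compl[of A] W1D[OF \<mu>] by (auto simp: Compl_eq_Diff_UNIV)
  have inverses: "ennreal (measure \<mu> A) * ennreal (1 / measure \<mu> A) = 1"
    "ennreal (1 - measure \<mu> A) * ennreal (1 / (1 - measure \<mu> A)) = 1"
    using a by (simp_all flip: ennreal_mult)
  fix B assume "B \<in> sets \<mu>"
  then have B: "B \<in> sets borel" using W1D[OF \<mu>] by simp
  have "emeasure \<mu> B = emeasure \<mu> (A \<inter> B) + emeasure \<mu> (- A \<inter> B)"
    using A B W1D[OF \<mu>] by (subst plus_emeasure) (auto intro: arg_cong[where f = "emeasure \<mu>"])
  also have "\<dots> = ennreal (measure \<mu> A) * (ennreal (1 / measure \<mu> A) * emeasure \<mu> (A \<inter> B))
      + ennreal (1 - measure \<mu> A) * (ennreal (1 / (1 - measure \<mu> A)) * emeasure \<mu> (- A \<inter> B))"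
    using inverses by (simp add: mult.assoc[symmetric])
  also have "\<dots> = emeasure (mix_measure (measure \<mu> A) (cond_measure \<mu> A) (cond_measure \<mu> (- A))) B"
    using emeasure_cond_measure[OF \<mu> A a(1) B] emeasure_cond_measure[OF \<mu> _ _ B, of "- A"] A a compl
    by (simp add: emeasure_mix_measure)
  finally show "emeasure \<mu> B = emeasure (mix_measure (measure \<mu> A) (cond_measure \<mu> A) (cond_measure \<mu> (- A))) B" .
qed simp

lemma W1_between_if_nontrivial_event:
  fixes \<mu> :: "'a::polish_space measure"
  assumes \<mu>: "\<mu> \<in> W1" and A: "A \<in> sets borel" and a: "0 < measure \<mu> A" "measure \<mu> A < 1"
  shows "W1_between \<mu>"
proof -
  interpret prob_space \<mu> using W1D[OF \<mu>] by simp
  have "measure \<mu> (- A) = 1 - measure \<mu> A"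
    using A prob_compl[of A] W1D[OF \<mu>] by (auto simp: Compl_eq_Diff_UNIV)
  then have "0 < measure \<mu> (- A)"
    using a by simp
  define \<nu>1 \<nu>2 where "\<nu>1 = cond_measure \<mu> A" and "\<nu>2 = cond_measure \<mu> (- A)"
  have \<nu>: "\<nu>1 \<in> W1" "\<nu>2 \<in> W1"
    using cond_measure_in_W1[OF \<mu> A a(1)] cond_measure_in_W1[OF \<mu> _ \<open>0 < measure \<mu> (- A)\<close>] A
    by (auto simp: \<nu>1_def \<nu>2_def)
  have split: "\<mu> = mix_measure (measure \<mu> A) \<nu>1 \<nu>2"
    unfolding \<nu>1_def \<nu>2_def by (rule mix_measure_cond_measure[OF \<mu> A a])
  have "emeasure \<nu>1 A = 1" "emeasure \<nu>2 A = 0" "emeasure \<mu> A = ennreal (measure \<mu> A)"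
    using emeasure_cond_measure[OF \<mu> A a(1) A] emeasure_cond_measure[OF \<mu> _ \<open>0 < measure \<mu> (- A)\<close> A] A a
    by (simp_all add: \<nu>1_def \<nu>2_def emeasure_eq_measure flip: ennreal_mult)
  then have "\<nu>1 \<noteq> \<mu>" "\<nu>2 \<noteq> \<mu>"
    using a by auto
  moreover have "W1_dist \<nu>1 \<mu> + W1_dist \<mu> \<nu>2 \<le> W1_dist \<nu>1 \<nu>2"
    using W1_dist_mix_measure_between[OF \<nu>, of "measure \<mu> A"] a split by simp
  ultimately show ?thesis
    unfolding W1_between_def using \<nu> by blast
qed

lemma W1_between_iff_not_return:
  fixes \<mu> :: "'a::polish_space measure"
  assumes strict: "\<And>x y z::'a. z \<noteq> x \<Longrightarrow> z \<noteq> y \<Longrightarrow> dist x y < dist x z + dist z y"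
    and \<mu>: "\<mu> \<in> W1"
  shows "W1_between \<mu> \<longleftrightarrow> (\<forall>x. \<mu> \<noteq> return borel x)"
proof
  assume "W1_between \<mu>"
  then show "\<forall>x. \<mu> \<noteq> return borel x"
    using return_not_W1_between[OF strict] by blast
next
  assume not_return: "\<forall>x. \<mu> \<noteq> return borel x"
  interpret prob_space \<mu> using W1D[OF \<mu>] by simp
  obtain A where A: "A \<in> sets borel" "measure \<mu> A \<noteq> 0" "measure \<mu> A \<noteq> 1"
    using prob_space_zero_one_imp_return[OF prob_space_axioms W1D(1)[OF \<mu>]] not_return by blast
  moreover have "0 \<le> measure \<mu> A" "measure \<mu> A \<le> 1"
    by (simp_all add: prob_le_1)
  ultimately have "0 < measure \<mu> A" "measure \<mu> A < 1"
    by linarith+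
  then show "W1_between \<mu>"
    using W1_between_if_nontrivial_event[OF \<mu> A(1)] by simp
qed

section \<open>Approximation by finitely supported measures\<close>

lemma dense_sequence:
  obtains c :: "nat \<Rightarrow> 'a::{metric_space, second_countable_topology}"
  where "\<And>x e. 0 < e \<Longrightarrow> \<exists>k. dist x (c k) < e"
proof -
  obtain D :: "'a set" where D: "countable D" "\<And>U. open U \<Longrightarrow> U \<noteq> {} \<Longrightarrow> \<exists>d\<in>D. d \<in> U"
    using countable_dense_exists by blast
  have "D \<noteq> {}"
    using D(2)[of UNIV] by auto
  then have range: "range (from_nat_into D) = D"
    using D(1) by (rule range_from_nat_into)
  show thesis
  proof (rule that)
    fix x :: 'a and e :: real assume "0 < e"
    then obtain d where "d \<in> D" "dist x d < e"
      using D(2)[of "ball x e"] by auto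
    then show "\<exists>k. dist x (from_nat_into D k) < e"
      using range by (metis rangeE)
  qed
qed

primrec quantize :: "(nat \<Rightarrow> 'a::metric_space) \<Rightarrow> real \<Rightarrow> nat \<Rightarrow> 'a \<Rightarrow> 'a" where
  "quantize c d 0 x = c 0"
| "quantize c d (Suc k) x = (if dist x (c k) < d then c k else quantize c d k x)"

lemma quantize_in_range: "quantize c d N x \<in> c ` {..N}"
  by (induction N) auto

lemma dist_quantize_less: "\<exists>k<N. dist x (c k) < d \<Longrightarrow> dist x (quantize c d N x) < d"
  by (induction N) (auto simp: less_Suc_eq)

lemma quantize_eq_first: "\<not> (\<exists>k<N. dist x (c k) < d) \<Longrightarrow> quantize c d N x = c 0"
  by (induction N) (auto simp: less_Suc_eq)

lemma borel_measurable_quantize [measurable]: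
  "quantize c d N \<in> borel_measurable (borel :: 'a::polish_space measure)"
proof (induction N)
  case (Suc N)
  have "{x. dist x (c N) < d} \<in> sets borel"
    by (intro borel_open open_Collect_less continuous_intros)
  then have "(\<lambda>x. if x \<in> {x. dist x (c N) < d} then c N else quantize c d N x) \<in> borel_measurable borel"
    using Suc by (intro measurable_If_set) auto
  then show ?case
    by (simp add: fun_eq_iff)
qed simp

lemma integral_dist_tail_small:
  fixes \<mu> :: "'a::polish_space measure"
  assumes \<mu>: "\<mu> \<in> W1" and U: "incseq U" "\<And>k. U k \<in> sets borel" "\<And>x. \<exists>k. x \<in> U k" and e: "0 < e"
  obtains N where "(\<integral>x. indicator (- U N) x * dist x y \<partial>\<mu>) < e"
proof -
  have [measurable_cong]: "sets \<mu> = sets borel" using W1D[OF \<mu>] by simp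
  have [measurable]: "U k \<in> sets borel" for k using U(2) .
  have "(\<lambda>N. \<integral>x. indicator (- U N) x * dist x y \<partial>\<mu>) \<longlonglongrightarrow> (\<integral>x. 0 \<partial>\<mu>)"
  proof (rule integral_dominated_convergence[where w = "\<lambda>x. dist x y"])
    show "AE x in \<mu>. (\<lambda>N. indicator (- U N) x * dist x y) \<longlonglongrightarrow> 0"
    proof (rule AE_I2)
      fix x
      obtain k where "x \<in> U k" using U(3) by blast
      then have "x \<in> U n" if "k \<le> n" for n
        using U(1) that by (auto simp: incseq_def)
      then have "\<forall>\<^sub>F N in sequentially. indicator (- U N) x * dist x y = (0::real)"
        unfolding eventually_sequentially by (intro exI[of _ k]) auto
      then show "(\<lambda>N. indicator (- U N) x * dist x y) \<longlonglongrightarrow> 0"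
        by (rule tendsto_eventually)
    qed
  qed (use integrable_dist_W1(1)[OF \<mu>] in \<open>auto simp: indicator_def\<close>)
  then have "\<forall>\<^sub>F N in sequentially. (\<integral>x. indicator (- U N) x * dist x y \<partial>\<mu>) < e"
    using e by (intro order_tendstoD(2)) simp_all
  then show thesis
    using that by (auto simp: eventually_sequentially)
qed

lemma W1_dist_distr_quantize_le:
  fixes \<mu> :: "'a::polish_space measure" and c :: "nat \<Rightarrow> 'a" and d :: real and N :: nat
  assumes \<mu>: "\<mu> \<in> W1"
  defines "U \<equiv> {x. \<exists>k<N. dist x (c k) < d}"
  shows "W1_dist \<mu> (distr \<mu> borel (quantize c d N))
    \<le> ennreal d + ennreal (\<integral>x. indicator (- U) x * dist x (c 0) \<partial>\<mu>)"
proof -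
  interpret prob_space \<mu> using W1D[OF \<mu>] by simp
  have [measurable_cong]: "sets \<mu> = sets borel" using W1D[OF \<mu>] by simp
  have "U = (\<Union>k<N. ball (c k) d)"
    by (auto simp: U_def dist_commute)
  then have [measurable]: "U \<in> sets borel"
    by (simp add: borel_open)
  have "W1_dist \<mu> (distr \<mu> borel (quantize c d N)) \<le> (\<integral>\<^sup>+x. ennreal (dist x (quantize c d N x)) \<partial>\<mu>)"
    by (rule W1_dist_distr_le[OF \<mu>]) measurable
  also have "\<dots> \<le> (\<integral>\<^sup>+x. ennreal d + ennreal (indicator (- U) x * dist x (c 0)) \<partial>\<mu>)"
  proof (rule nn_integral_mono)
    fix x
    show "ennreal (dist x (quantize c d N x)) \<le> ennreal d + ennreal (indicator (- U) x * dist x (c 0))"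
    proof (cases "x \<in> U")
      case True
      then have "dist x (quantize c d N x) < d"
        unfolding U_def by (intro dist_quantize_less) simp
      then show ?thesis
        by (simp add: ennreal_leI add_increasing2)
    next
      case False
      then show ?thesis
        by (simp add: U_def quantize_eq_first add_increasing)
    qed
  qed
  also have "\<dots> = (\<integral>\<^sup>+x. ennreal d \<partial>\<mu>) + (\<integral>\<^sup>+x. ennreal (indicator (- U) x * dist x (c 0)) \<partial>\<mu>)"
    by (rule nn_integral_add) measurable
  also have "\<dots> = ennreal d + ennreal (\<integral>x. indicator (- U) x * dist x (c 0) \<partial>\<mu>)"
    using integrable_real_mult_indicator[OF _ integrable_dist_W1(1)[OF \<mu>, of "c 0"], of "- U"]
    by (simp add: emeasure_space_1 nn_integral_eq_integral mult.commute)
  finally show ?thesis .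
qed

lemma W1_finite_support_approx:
  fixes \<mu> :: "'a::polish_space measure"
  assumes \<mu>: "\<mu> \<in> W1" and e: "0 < e"
  obtains \<eta> S where "\<eta> \<in> W1" "finite S" "emeasure \<eta> (- S) = 0" "W1_dist \<mu> \<eta> \<le> ennreal e"
proof -
  have [measurable_cong]: "sets \<mu> = sets borel" using W1D[OF \<mu>] by simp
  obtain c :: "nat \<Rightarrow> 'a" where c: "\<And>x e. 0 < e \<Longrightarrow> \<exists>k. dist x (c k) < e"
    using dense_sequence by blast
  define d where "d = e / 2"
  have d: "0 < d" using e by (simp add: d_def)
  define U where "U N = {x. \<exists>k<N. dist x (c k) < d}" for N
  have "U N = (\<Union>k<N. ball (c k) d)" for N
    by (auto simp: U_def dist_commute)
  then have U_sets: "U N \<in> sets borel" for N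
    by (simp add: borel_open)
  have U_inc: "incseq U"
    by (auto simp: incseq_def U_def intro: order.strict_trans2)
  have U_cover: "\<exists>N. x \<in> U N" for x
    using c[OF d, of x] by (auto simp: U_def)
  obtain N where N: "(\<integral>x. indicator (- U N) x * dist x (c 0) \<partial>\<mu>) < d"
    by (rule integral_dist_tail_small[OF \<mu> U_inc U_sets U_cover d])
  define \<eta> where "\<eta> = distr \<mu> borel (quantize c d N)"
  have "dist (quantize c d N x) (c 0) \<le> dist x (c 0) + Max ((\<lambda>k. dist (c k) (c 0)) ` {..N})" for x
    using quantize_in_range[of c d N x] by (auto intro: add_increasing Max_ge)
  then have "\<eta> \<in> W1"
    unfolding \<eta>_def by (rule distr_in_W1[OF \<mu> borel_measurable_quantize])
  moreover have "emeasure \<eta> (- c ` {..N}) = 0"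
  proof -
    have "quantize c d N -` (- c ` {..N}) = {}"
      using quantize_in_range[of c d N] by auto
    then show ?thesis
      unfolding \<eta>_def using W1D(2)[OF \<mu>]
      by (subst emeasure_distr) (simp_all add: borel_closed finite_imp_closed)
  qed
  moreover have "W1_dist \<mu> \<eta> \<le> ennreal e"
  proof -
    have "W1_dist \<mu> \<eta> \<le> ennreal d + ennreal (\<integral>x. indicator (- U N) x * dist x (c 0) \<partial>\<mu>)"
      unfolding \<eta>_def U_def by (rule W1_dist_distr_quantize_le[OF \<mu>])
    also have "\<dots> \<le> ennreal e"
      using N d by (simp add: d_def integral_nonneg flip: ennreal_plus)
    finally show ?thesis .
  qed
  ultimately show thesis
    using that by blast
qed

section \<open>Integrals of Lipschitz functions determine a measure\<close>

lemma tendsto_truncated_infdist: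
  fixes U :: "'a::metric_space set"
  assumes "open U" "U \<noteq> UNIV"
  shows "(\<lambda>n. min 1 (real (Suc n) * infdist x (- U))) \<longlonglongrightarrow> indicator U x"
proof (cases "x \<in> U")
  case True
  then have "0 < infdist x (- U)"
    using assms by (intro infdist_pos_not_in_closed) auto
  then obtain k where k: "inverse (Suc k) < infdist x (- U)"
    using reals_Archimedean by blast
  have "min 1 (real (Suc n) * infdist x (- U)) = 1" if "k \<le> n" for n
  proof -
    have "1 < real (Suc k) * infdist x (- U)"
      using k by (simp add: field_simps)
    also have "\<dots> \<le> real (Suc n) * infdist x (- U)"
      using that by (intro mult_right_mono) (auto simp: infdist_nonneg)
    finally show ?thesis
      by simp
  qed
  then have "\<forall>\<^sub>F n in sequentially. min 1 (real (Suc n) * infdist x (- U)) = indicator U x"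
    using True unfolding eventually_sequentially by auto
  then show ?thesis
    by (rule tendsto_eventually)
qed simp

lemma integral_truncated_infdist_tendsto:
  fixes K :: "'a::polish_space measure"
  assumes K: "K \<in> W1" and U: "open U" "U \<noteq> UNIV"
  shows "(\<lambda>n. \<integral>x. min 1 (real (Suc n) * infdist x (- U)) \<partial>K) \<longlonglongrightarrow> measure K U"
proof -
  interpret prob_space K using W1D[OF K] by simp
  have [measurable_cong]: "sets K = sets borel" using W1D[OF K] by simp
  have [measurable]: "U \<in> sets borel"
    using U by (simp add: borel_open)
  have [measurable]: "(\<lambda>x. infdist x (- U)) \<in> borel_measurable borel"
    by (intro borel_measurable_continuous_onI continuous_intros)
  have "(\<lambda>n. \<integral>x. min 1 (real (Suc n) * infdist x (- U)) \<partial>K) \<longlonglongrightarrow> (\<integral>x. indicator U x \<partial>K)"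
  proof (rule integral_dominated_convergence[where w = "\<lambda>_. 1"])
    show "AE x in K. (\<lambda>n. min 1 (real (Suc n) * infdist x (- U))) \<longlonglongrightarrow> indicator U x"
      using tendsto_truncated_infdist[OF U] by simp
    show "AE x in K. norm (min 1 (real (Suc n) * infdist x (- U))) \<le> 1" for n
      by (simp add: infdist_nonneg)
    show "indicator U \<in> borel_measurable K"
      by (rule borel_measurable_indicator) (simp add: W1D(1)[OF K] borel_open U(1))
    show "(\<lambda>x. min 1 (real (Suc n) * infdist x (- U))) \<in> borel_measurable K" for n
      by measurable
  qed simp
  then show ?thesis
    using W1D(1)[OF K] by simp
qed

lemma emeasure_open_eq_if_lipschitz_integrals_eq:
  fixes M N :: "'a::polish_space measure"
  assumes M: "M \<in> W1" and N: "N \<in> W1"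
    and eq: "\<And>f :: 'a \<Rightarrow> real. 1-lipschitz_on UNIV f \<Longrightarrow> (\<integral>x. f x \<partial>M) = (\<integral>x. f x \<partial>N)"
    and U: "open U"
  shows "emeasure M U = emeasure N U"
proof (cases "U = UNIV")
  case True
  then show ?thesis
    using prob_space.emeasure_space_1 W1D M N by metis
next
  interpret M: prob_space M using W1D[OF M] by simp
  interpret N: prob_space N using W1D[OF N] by simp
  case False
  define f where "f n x = min 1 (real (Suc n) * infdist x (- U))" for n x
  have lipschitz: "1-lipschitz_on UNIV (\<lambda>x. f n x / real (Suc n))" for n
  proof (rule lipschitz_onI)
    fix x y
    have "f n z / real (Suc n) = min (inverse (Suc n)) (infdist z (- U))" for z
      unfolding f_def by (simp add: min_def field_simps)
    then show "dist (f n x / real (Suc n)) (f n y / real (Suc n)) \<le> 1 * dist x y"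
      using infdist_triangle_abs[of x "- U" y] by (auto simp: dist_real_def min_def abs_if)
  qed simp
  have "(\<lambda>n. \<integral>x. f n x \<partial>M) = (\<lambda>n. \<integral>x. f n x \<partial>N)"
    using eq[OF lipschitz] by simp
  moreover have "(\<lambda>n. \<integral>x. f n x \<partial>M) \<longlonglongrightarrow> measure M U" "(\<lambda>n. \<integral>x. f n x \<partial>N) \<longlonglongrightarrow> measure N U"
    unfolding f_def using integral_truncated_infdist_tendsto[OF _ U False] M N by simp_all
  ultimately have "measure M U = measure N U"
    using LIMSEQ_unique by metis
  then show ?thesis
    by (simp add: M.emeasure_eq_measure N.emeasure_eq_measure)
qed

lemma measure_eqI_lipschitz:
  fixes M N :: "'a::polish_space measure"
  assumes M: "M \<in> W1" and N: "N \<in> W1"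
    and eq: "\<And>f :: 'a \<Rightarrow> real. 1-lipschitz_on UNIV f \<Longrightarrow> (\<integral>x. f x \<partial>M) = (\<integral>x. f x \<partial>N)"
  shows "M = N"
proof (rule measure_eqI_generator_eq[where E = "{U. open U}" and \<Omega> = UNIV and A = "\<lambda>_. UNIV"])
  show "sets M = sigma_sets UNIV {U. open U}" "sets N = sigma_sets UNIV {U. open U}"
    using W1D(1) M N by (simp_all add: sets_borel)
  show "emeasure M U = emeasure N U" if "U \<in> {U. open U}" for U
    using emeasure_open_eq_if_lipschitz_integrals_eq[OF M N eq] that by simp
  show "emeasure M UNIV \<noteq> \<infinity>"
    using prob_space.emeasure_space_1[OF W1D(3)[OF M]] W1D(2)[OF M] by simp
qed (auto simp: Int_stable_def)

section \<open>Transport towards a point\<close>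

lemma Inter_excess_sublevel_eq:
  fixes z b :: "'a::metric_space"
  assumes strict: "\<And>x y z::'a. z \<noteq> x \<Longrightarrow> z \<noteq> y \<Longrightarrow> dist x y < dist x z + dist z y"
    and "z \<noteq> b"
  shows "(\<Inter>k. {x. dist x z + dist z b - dist x b < inverse (Suc k)}) = {z}"
proof safe
  fix x assume x: "x \<in> (\<Inter>k. {x. dist x z + dist z b - dist x b < inverse (Suc k)})"
  have "dist x z + dist z b - dist x b \<le> 0"
  proof (rule ccontr)
    assume "\<not> ?thesis"
    then have "0 < dist x z + dist z b - dist x b"
      by simp
    then obtain k where "inverse (Suc k) < dist x z + dist z b - dist x b"
      using reals_Archimedean by blast
    moreover have "dist x z + dist z b - dist x b < inverse (Suc k)"
      using x by blast
    ultimately show False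
      by simp
  qed
  then show "x = z"
    using strict[of z x b] \<open>z \<noteq> b\<close> by (cases "x = z") auto
qed simp

lemma measure_excess_sublevel_less:
  fixes M :: "'a::polish_space measure"
  assumes strict: "\<And>x y z::'a. z \<noteq> x \<Longrightarrow> z \<noteq> y \<Longrightarrow> dist x y < dist x z + dist z y"
    and "finite_measure M" "sets M = sets borel" "z \<noteq> b" "measure M {z} < c"
  obtains e where "0 < e" "measure M {x. dist x z + dist z b - dist x b < e} < c"
proof -
  interpret finite_measure M by fact
  define U where "U k = {x. dist x z + dist z b - dist x b < inverse (Suc k)}" for k
  have "open (U k)" for k
    unfolding U_def by (intro open_Collect_less continuous_intros)
  then have "range U \<subseteq> sets M"
    using assms(3) by (auto simp: borel_open)
  moreover have "decseq U"
  proof (rule decseq_SucI)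
    fix k
    have "inverse (real (Suc (Suc k))) \<le> inverse (real (Suc k))"
      by (rule le_imp_inverse_le) simp_all
    then show "U (Suc k) \<subseteq> U k"
      unfolding U_def by (intro Collect_mono impI) linarith
  qed
  moreover have "(\<Inter>k. U k) = {z}"
    unfolding U_def by (rule Inter_excess_sublevel_eq[OF strict \<open>z \<noteq> b\<close>])
  ultimately have "(\<lambda>k. measure M (U k)) \<longlonglongrightarrow> measure M {z}"
    using finite_Lim_measure_decseq by metis
  then have "\<forall>\<^sub>F k in sequentially. measure M (U k) < c"
    using assms(5) by (rule order_tendstoD(2))
  then obtain k where "measure M (U k) < c"
    by (auto simp: eventually_sequentially)
  then show thesis
    using that[of "inverse (Suc k)"] by (simp add: U_def)
qed

lemma coupling_measure_excess_le:
  fixes \<pi> :: "('a::polish_space \<times> 'a) measure"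
  assumes \<pi>: "\<pi> \<in> couplings M N" and M: "M \<in> W1" and N: "N \<in> W1" and e: "0 < e"
  shows "measure \<pi> {p \<in> space \<pi>. e \<le> dist (fst p) (snd p) + dist b (snd p) - dist b (fst p)}
    \<le> ((\<integral>p. dist (fst p) (snd p) \<partial>\<pi>) - ((\<integral>x. dist b x \<partial>M) - (\<integral>x. dist b x \<partial>N))) / e"
proof -
  define G where "G p = dist (fst p) (snd p) + dist b (snd p) - dist b (fst p)" for p :: "'a \<times> 'a"
  have int: "integrable \<pi> G"
    unfolding G_def using integrable_dist_coupling[OF \<pi> M N] integrable_dist_coupling_fst[OF \<pi> M N]
      integrable_dist_coupling_snd[OF \<pi> M N] by auto
  have "0 \<le> G p" for p
    unfolding G_def using dist_triangle[of b "fst p" "snd p"] by (simp add: dist_commute)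
  then have "measure \<pi> {p \<in> space \<pi>. e \<le> G p} \<le> (\<integral>p. G p \<partial>\<pi>) / e"
    using e by (intro integral_Markov_inequality_measure[OF int, of "space \<pi>"] AE_I2) auto
  also have "(\<integral>p. G p \<partial>\<pi>) = (\<integral>p. dist (fst p) (snd p) \<partial>\<pi>) - ((\<integral>x. dist b x \<partial>M) - (\<integral>x. dist b x \<partial>N))"
    unfolding G_def using integrable_dist_coupling[OF \<pi> M N] integrable_dist_coupling_fst[OF \<pi> M N]
      integrable_dist_coupling_snd[OF \<pi> M N]
    by (simp add: integral_dist_coupling_fst[OF \<pi> M N] integral_dist_coupling_snd[OF \<pi> M N])
  finally show ?thesis
    by (simp add: G_def)
qed

lemma coupling_measure_singleton_le:
  fixes \<pi> :: "('a::polish_space \<times> 'a) measure"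
  assumes \<pi>: "\<pi> \<in> couplings M N"
  shows "measure N {z} \<le> measure M {x. dist x z + dist z b - dist x b < e}
    + measure \<pi> {p \<in> space \<pi>. e \<le> dist (fst p) (snd p) + dist b (snd p) - dist b (fst p)}"
proof -
  interpret \<pi>: prob_space \<pi> using couplingsD(3)[OF \<pi>] .
  have [measurable_cong]: "sets \<pi> = sets (borel \<Otimes>\<^sub>M borel)"
    using couplingsD(1)[OF \<pi>] .
  let ?U = "{x. dist x z + dist z b - dist x b < e}"
  let ?E = "{p \<in> space \<pi>. e \<le> dist (fst p) (snd p) + dist b (snd p) - dist b (fst p)}"
  let ?F = "fst -` ?U \<inter> space \<pi>"
  have [measurable]: "?U \<in> sets borel"
    by (intro borel_open open_Collect_less continuous_intros)
  have sets: "?F \<in> sets \<pi>" "?E \<in> sets \<pi>"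
    by measurable
  have "measure N {z} = measure \<pi> (snd -` {z} \<inter> space \<pi>)"
    using couplingsD(5)[OF \<pi>] by (auto simp: measure_distr)
  also have "\<dots> \<le> measure \<pi> (?F \<union> ?E)"
    using sets by (intro \<pi>.finite_measure_mono) (auto simp: dist_commute)
  also have "\<dots> \<le> measure \<pi> ?F + measure \<pi> ?E"
    using sets by (intro measure_subadditive) auto
  also have "measure \<pi> ?F = measure M ?U"
    using couplingsD(4)[OF \<pi>] by (auto simp: measure_distr)
  finally show ?thesis .
qed

(* A transport from M to N that costs no more than the decrease of the mean distance to b moves
   mass only along geodesics towards b; by the strict triangle inequality no such geodesic passes
   through z, so N cannot carry more mass at z than M. *)
lemma emeasure_singleton_le_if_W1_dist_le_potential_drop:
  fixes M N :: "'a::polish_space measure"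
  assumes strict: "\<And>x y z::'a. z \<noteq> x \<Longrightarrow> z \<noteq> y \<Longrightarrow> dist x y < dist x z + dist z y"
    and M: "M \<in> W1" and N: "N \<in> W1" and "z \<noteq> b"
    and le: "W1_dist M N \<le> ennreal ((\<integral>x. dist b x \<partial>M) - (\<integral>x. dist b x \<partial>N))"
  shows "emeasure N {z} \<le> emeasure M {z}"
proof (rule ccontr)
  interpret M: prob_space M using W1D[OF M] by simp
  interpret N: prob_space N using W1D[OF N] by simp
  define r where "r = (\<integral>x. dist b x \<partial>M) - (\<integral>x. dist b x \<partial>N)"
  assume "\<not> ?thesis"
  then have "measure M {z} < measure N {z}"
    by (simp add: M.emeasure_eq_measure N.emeasure_eq_measure)
  then obtain e where e: "0 < e" "measure M {x. dist x z + dist z b - dist x b < e} < measure N {z}"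
    using measure_excess_sublevel_less[OF strict _ W1D(1)[OF M] \<open>z \<noteq> b\<close>] M.finite_measure_axioms
    by blast
  define \<gamma> where "\<gamma> = measure N {z} - measure M {x. dist x z + dist z b - dist x b < e}"
  have "0 < \<gamma>" using e(2) by (simp add: \<gamma>_def)
  have "ennreal \<bar>r\<bar> \<le> ennreal r"
    using order.trans[OF abs_integral_lipschitz_diff_le_W1_dist[OF M N lipschitz_on_dist[of UNIV b]] le]
    by (simp add: r_def)
  then have "0 \<le> r"
    by (cases "0 \<le> r") (auto simp: ennreal_neg)
  then have "W1_dist M N < ennreal (r + e * \<gamma>)"
    using le e(1) \<open>0 < \<gamma>\<close> by (auto simp: r_def ennreal_less_iff elim!: order.strict_trans1)
  then obtain \<pi> where \<pi>: "\<pi> \<in> couplings M N"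
    and "(\<integral>\<^sup>+p. ennreal (dist (fst p) (snd p)) \<partial>\<pi>) < ennreal (r + e * \<gamma>)"
    unfolding W1_dist_def by (auto simp: INF_less_iff)
  then have cost: "(\<integral>p. dist (fst p) (snd p) \<partial>\<pi>) < r + e * \<gamma>"
    by (simp add: nn_integral_dist_coupling[OF \<pi> M N] ennreal_less_iff)
  have "measure \<pi> {p \<in> space \<pi>. e \<le> dist (fst p) (snd p) + dist b (snd p) - dist b (fst p)}
      \<le> ((\<integral>p. dist (fst p) (snd p) \<partial>\<pi>) - r) / e"
    using coupling_measure_excess_le[OF \<pi> M N e(1), of b] by (simp add: r_def)
  also have "\<dots> < \<gamma>"
    using cost e(1) by (simp add: pos_divide_less_eq algebra_simps)
  finally show False
    using coupling_measure_singleton_le[OF \<pi>, of z b e] by (simp add: \<gamma>_def)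
qed

definition move_atom :: "'a::topological_space \<Rightarrow> 'a \<Rightarrow> 'a measure \<Rightarrow> 'a measure" where
  "move_atom a b \<eta> = distr \<eta> borel (\<lambda>x. if x = a then b else x)"

lemma borel_measurable_move_point [measurable]:
  "(\<lambda>x. if x = a then b else x) \<in> borel_measurable (borel :: 'a::t1_space measure)"
proof -
  have "(\<lambda>x. if x \<in> {a} then b else x) \<in> borel_measurable (borel :: 'a measure)"
    by (rule measurable_If_set) auto
  then show ?thesis
    by simp
qed

lemma emeasure_move_atom:
  fixes \<eta> :: "'a::polish_space measure"
  assumes "\<eta> \<in> W1" "B \<in> sets borel"
  shows "emeasure (move_atom a b \<eta>) B = emeasure \<eta> ((\<lambda>x. if x = a then b else x) -` B)"
  using assms W1D[OF assms(1)] by (simp add: move_atom_def emeasure_distr)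

lemma move_atom_in_W1:
  fixes \<eta> :: "'a::polish_space measure"
  assumes "\<eta> \<in> W1"
  shows "move_atom a b \<eta> \<in> W1"
  unfolding move_atom_def by (rule distr_in_W1[OF assms _, of _ b b 0]) auto

lemma emeasure_move_atom_singleton:
  fixes \<eta> :: "'a::polish_space measure"
  assumes "\<eta> \<in> W1" "z \<noteq> a" "z \<noteq> b"
  shows "emeasure (move_atom a b \<eta>) {z} = emeasure \<eta> {z}"
proof -
  have "(\<lambda>x. if x = a then b else x) -` {z} = {z}"
    using assms by auto
  then show ?thesis
    using emeasure_move_atom[OF assms(1), of "{z}"] by simp
qed

lemma emeasure_move_atom_support:
  fixes \<eta> :: "'a::polish_space measure"
  assumes "\<eta> \<in> W1" "finite S" "a \<in> S" "b \<in> S" "a \<noteq> b" "emeasure \<eta> (- S) = 0"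
  shows "emeasure (move_atom a b \<eta>) (- (S - {a})) = 0"
proof -
  have "(\<lambda>x. if x = a then b else x) -` (- (S - {a})) = - S"
    using assms by (auto split: if_splits)
  then show ?thesis
    using emeasure_move_atom[OF assms(1), of "- (S - {a})"] assms by (simp add: borel_closed finite_imp_closed)
qed

lemma W1_dist_move_atom_le:
  fixes \<eta> :: "'a::polish_space measure"
  assumes \<eta>: "\<eta> \<in> W1"
  shows "W1_dist \<eta> (move_atom a b \<eta>) \<le> ennreal (dist a b * measure \<eta> {a})"
proof -
  interpret prob_space \<eta> using W1D[OF \<eta>] by simp
  have "W1_dist \<eta> (move_atom a b \<eta>) \<le> (\<integral>\<^sup>+x. ennreal (dist x (if x = a then b else x)) \<partial>\<eta>)"
    unfolding move_atom_def by (rule W1_dist_distr_le[OF \<eta>]) measurable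
  also have "\<dots> = (\<integral>\<^sup>+x. ennreal (dist a b) * indicator {a} x \<partial>\<eta>)"
    by (intro nn_integral_cong) (simp add: indicator_def)
  also have "\<dots> = ennreal (dist a b * measure \<eta> {a})"
    using W1D(1)[OF \<eta>] by (simp add: emeasure_eq_measure ennreal_mult)
  finally show ?thesis .
qed

lemma integral_dist_move_atom:
  fixes \<eta> :: "'a::polish_space measure"
  assumes \<eta>: "\<eta> \<in> W1"
  shows "(\<integral>x. dist b x \<partial>\<eta>) - (\<integral>x. dist b x \<partial>move_atom a b \<eta>) = dist a b * measure \<eta> {a}"
proof -
  interpret prob_space \<eta> using W1D[OF \<eta>] by simp
  have [measurable_cong]: "sets \<eta> = sets borel" using W1D[OF \<eta>] by simp
  let ?g = "\<lambda>x. if x = a then b else x"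
  have "integrable \<eta> (\<lambda>x. dist b (?g x))"
    by (rule Bochner_Integration.integrable_bound[OF integrable_dist_W1(2)[OF \<eta>, of b]]) auto
  moreover have "(\<integral>x. dist b x \<partial>move_atom a b \<eta>) = (\<integral>x. dist b (?g x) \<partial>\<eta>)"
    unfolding move_atom_def by (rule integral_distr) measurable
  ultimately have "(\<integral>x. dist b x \<partial>\<eta>) - (\<integral>x. dist b x \<partial>move_atom a b \<eta>) = (\<integral>x. dist b x - dist b (?g x) \<partial>\<eta>)"
    using integrable_dist_W1(2)[OF \<eta>] by simp
  also have "\<dots> = (\<integral>x. dist a b * indicator {a} x \<partial>\<eta>)"
    by (intro Bochner_Integration.integral_cong) (auto simp: dist_commute)
  also have "\<dots> = dist a b * measure \<eta> {a}"
    using W1D[OF \<eta>] by simp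
  finally show ?thesis .
qed
section \<open>Wasserstein isometries\<close>

locale W1_isometry_strict_triangle =
  fixes \<Phi> :: "'a::polish_space measure \<Rightarrow> 'a measure"
  assumes strict_triangle: "\<And>x y z::'a. z \<noteq> x \<Longrightarrow> z \<noteq> y \<Longrightarrow> dist x y < dist x z + dist z y"
    and W1_isometry: "W1_isometry \<Phi>"
begin

lemma Phi_in_W1: "\<mu> \<in> W1 \<Longrightarrow> \<Phi> \<mu> \<in> W1"
  using W1_isometry unfolding W1_isometry_def bij_betw_def by auto

lemma W1_dist_Phi: "\<mu> \<in> W1 \<Longrightarrow> \<nu> \<in> W1 \<Longrightarrow> W1_dist (\<Phi> \<mu>) (\<Phi> \<nu>) = W1_dist \<mu> \<nu>"
  using W1_isometry unfolding W1_isometry_def by auto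

lemma Phi_return_ex: "\<exists>y. \<Phi> (return borel x) = return borel y"
  using W1_between_iff_not_return[OF strict_triangle] Phi_in_W1[OF return_in_W1]
    W1_between_W1_isometry_iff[OF W1_isometry return_in_W1]
    return_not_W1_between[OF strict_triangle] by blast

definition point_map :: "'a \<Rightarrow> 'a" where
  "point_map x = (SOME y. \<Phi> (return borel x) = return borel y)"

lemma Phi_return: "\<Phi> (return borel x) = return borel (point_map x)"
  unfolding point_map_def using Phi_return_ex by (rule someI_ex)

lemma dist_point_map: "dist (point_map x) (point_map y) = dist x y"
  using W1_dist_Phi[OF return_in_W1 return_in_W1, of x y] by (simp add: Phi_return W1_dist_return_return)

lemma isometry_point_map: "isometry point_map"
proof -
  have "inj point_map"
    by (rule injI) (metis dist_eq_0_iff dist_point_map)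
  moreover have "y \<in> range point_map" for y
  proof -
    obtain \<mu> where \<mu>: "\<mu> \<in> W1" "\<Phi> \<mu> = return borel y"
      using W1_isometry return_in_W1[of y] unfolding W1_isometry_def bij_betw_def by force
    then have "\<not> W1_between \<mu>"
      using W1_between_W1_isometry_iff[OF W1_isometry \<mu>(1)] return_not_W1_between[OF strict_triangle]
      by simp
    then obtain x where "\<mu> = return borel x"
      using W1_between_iff_not_return[OF strict_triangle \<mu>(1)] by blast
    then have "point_map x = y"
      using \<mu>(2) by (simp add: Phi_return)
    then show ?thesis by blast
  qed
  ultimately show ?thesis
    unfolding isometry_def bij_def using dist_point_map by blast
qed

lemma borel_measurable_point_map [measurable]: "point_map \<in> borel_measurable borel"
proof -
  have "1-lipschitz_on UNIV point_map"
    by (rule lipschitz_onI) (simp_all add: dist_point_map)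
  then show ?thesis
    by (intro borel_measurable_continuous_onI lipschitz_on_continuous_on)
qed

lemma distr_point_map_in_W1: "\<mu> \<in> W1 \<Longrightarrow> distr \<mu> borel point_map \<in> W1"
  by (rule distr_in_W1[where y' = x and y = "point_map x" and C = 0]) (simp_all add: dist_point_map)

lemma emeasure_distr_point_map_singleton:
  assumes "\<mu> \<in> W1"
  shows "emeasure (distr \<mu> borel point_map) {point_map z} = emeasure \<mu> {z}"
proof -
  have "point_map -` {point_map z} = {z}"
    using isometry_point_map by (auto simp: isometry_def bij_def dest: injD)
  then show ?thesis
    using W1D[OF assms] by (simp add: emeasure_distr)
qed

lemma integral_dist_Phi:
  assumes "\<nu> \<in> W1"
  shows "(\<integral>y. dist (point_map b) y \<partial>\<Phi> \<nu>) = (\<integral>y. dist b y \<partial>\<nu>)"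
proof -
  have "ennreal (\<integral>y. dist (point_map b) y \<partial>\<Phi> \<nu>) = W1_dist (\<Phi> (return borel b)) (\<Phi> \<nu>)"
    by (simp add: Phi_return W1_dist_return Phi_in_W1 assms)
  also have "\<dots> = ennreal (\<integral>y. dist b y \<partial>\<nu>)"
    by (simp add: W1_dist_Phi return_in_W1 assms W1_dist_return)
  finally show ?thesis
    by (simp add: integral_nonneg)
qed

lemma Phi_two_point_support_image:
  assumes \<eta>: "\<eta> \<in> W1" and support: "emeasure \<eta> (- {a, b}) = 0" and "a \<noteq> b"
  shows "emeasure (\<Phi> \<eta>) (- {point_map a, point_map b}) = 0"
proof -
  interpret \<eta>: prob_space \<eta> using W1D[OF \<eta>] by simp
  have \<Phi>\<eta>: "\<Phi> \<eta> \<in> W1" using Phi_in_W1[OF \<eta>] .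
  interpret \<Phi>\<eta>: prob_space "\<Phi> \<eta>" using W1D[OF \<Phi>\<eta>] by simp
  define A B D where "A = point_map a" and "B = point_map b" and "D = dist a b"
  have "dist A B = D"
    by (simp add: A_def B_def D_def dist_point_map)
  have "measure \<eta> {a} + measure \<eta> {b} = 1"
    using measure_finite_support[OF \<eta>.finite_measure_axioms W1D(1)[OF \<eta>] _ support, of UNIV]
      W1D(2)[OF \<eta>] \<eta>.prob_space \<open>a \<noteq> b\<close> by simp
  moreover have "(\<integral>w. dist A w \<partial>\<Phi> \<eta>) = D * measure \<eta> {b}"
    using integral_dist_Phi[OF \<eta>, of a] integral_dist_two_point[OF \<eta>.finite_measure_axioms W1D(1)[OF \<eta>] support]
    by (simp add: A_def D_def)
  moreover have "(\<integral>w. dist B w \<partial>\<Phi> \<eta>) = D * measure \<eta> {a}"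
    using integral_dist_Phi[OF \<eta>, of b] integral_dist_two_point[OF \<eta>.finite_measure_axioms W1D(1)[OF \<eta>], of b a]
      support by (simp add: B_def D_def insert_commute dist_commute)
  moreover define h where "h w = dist A w + dist B w - D" for w
  ultimately have "(\<integral>w. h w \<partial>\<Phi> \<eta>) = 0"
    unfolding h_def using integrable_dist_W1[OF \<Phi>\<eta>] \<Phi>\<eta>.prob_space
    by (simp add: algebra_simps flip: distrib_left)
  moreover have h_nonneg: "0 \<le> h w" for w
    unfolding h_def using dist_triangle3[of A B w] \<open>dist A B = D\<close> by (simp add: dist_commute)
  moreover have "integrable (\<Phi> \<eta>) h"
    unfolding h_def using integrable_dist_W1[OF \<Phi>\<eta>] by simp
  ultimately have "AE w in \<Phi> \<eta>. h w = 0"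
    using integral_nonneg_eq_0_iff_AE by blast
  then have "AE w in \<Phi> \<eta>. w \<in> {A, B}"
  proof eventually_elim
    case (elim w)
    then show ?case
      using strict_triangle[of w A B] \<open>dist A B = D\<close> by (auto simp: h_def dist_commute)
  qed
  then show ?thesis
    using W1D[OF \<Phi>\<eta>] unfolding A_def B_def
    by (subst (asm) AE_iff_measurable[of "- {point_map a, point_map b}"]) (auto simp: borel_open)
qed

lemma Phi_two_point_support:
  assumes \<eta>: "\<eta> \<in> W1" and support: "emeasure \<eta> (- {a, b}) = 0" and "a \<noteq> b"
  shows "\<Phi> \<eta> = distr \<eta> borel point_map"
proof -
  interpret \<eta>: prob_space \<eta> using W1D[OF \<eta>] by simp
  have \<Phi>\<eta>: "\<Phi> \<eta> \<in> W1" using Phi_in_W1[OF \<eta>] .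
  interpret \<Phi>\<eta>: prob_space "\<Phi> \<eta>" using W1D[OF \<Phi>\<eta>] by simp
  note support_\<Phi> = Phi_two_point_support_image[OF \<eta> support \<open>a \<noteq> b\<close>]
  have "measure (\<Phi> \<eta>) {point_map b} = measure \<eta> {b}" "measure (\<Phi> \<eta>) {point_map a} = measure \<eta> {a}"
    using \<open>a \<noteq> b\<close> integral_dist_two_point[OF \<Phi>\<eta>.finite_measure_axioms W1D(1)[OF \<Phi>\<eta>] support_\<Phi>]
      integral_dist_two_point[OF \<Phi>\<eta>.finite_measure_axioms W1D(1)[OF \<Phi>\<eta>], of "point_map b" "point_map a"]
      integral_dist_two_point[OF \<eta>.finite_measure_axioms W1D(1)[OF \<eta>] support]
      integral_dist_two_point[OF \<eta>.finite_measure_axioms W1D(1)[OF \<eta>], of b a]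
      integral_dist_Phi[OF \<eta>] support support_\<Phi>
    by (simp_all add: dist_point_map insert_commute)
  then show ?thesis
    using emeasure_distr_point_map_singleton[OF \<eta>, of a] emeasure_distr_point_map_singleton[OF \<eta>, of b]
    by (intro prob_space_eqI_finite_support[OF _ W1D(1)[OF \<Phi>\<eta>] _ _ _ support_\<Phi>])
      (auto simp: \<Phi>\<eta>.emeasure_eq_measure \<eta>.emeasure_eq_measure
        intro: \<Phi>\<eta>.prob_space_axioms W1D distr_point_map_in_W1 \<eta>)
qed

lemma emeasure_Phi_singleton_ge:
  assumes \<eta>: "\<eta> \<in> W1" and "z \<noteq> a" "z \<noteq> b"
    and Phi_move: "\<Phi> (move_atom a b \<eta>) = distr (move_atom a b \<eta>) borel point_map"
  shows "emeasure (distr \<eta> borel point_map) {point_map z} \<le> emeasure (\<Phi> \<eta>) {point_map z}"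
proof -
  let ?\<xi> = "move_atom a b \<eta>"
  have \<xi>: "?\<xi> \<in> W1"
    by (rule move_atom_in_W1[OF \<eta>])
  have ne: "point_map z \<noteq> point_map b"
    using dist_point_map[of z b] \<open>z \<noteq> b\<close> by auto
  have le: "W1_dist (\<Phi> \<eta>) (\<Phi> ?\<xi>)
      \<le> ennreal ((\<integral>x. dist (point_map b) x \<partial>\<Phi> \<eta>) - (\<integral>x. dist (point_map b) x \<partial>\<Phi> ?\<xi>))"
    using W1_dist_Phi[OF \<eta> \<xi>] W1_dist_move_atom_le[OF \<eta>, of a b] integral_dist_move_atom[OF \<eta>, of b a]
      integral_dist_Phi[OF \<eta>] integral_dist_Phi[OF \<xi>] by simp
  have "emeasure (\<Phi> ?\<xi>) {point_map z} \<le> emeasure (\<Phi> \<eta>) {point_map z}"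
    by (rule emeasure_singleton_le_if_W1_dist_le_potential_drop[OF strict_triangle Phi_in_W1[OF \<eta>]
          Phi_in_W1[OF \<xi>] ne le])
  then show ?thesis
    using Phi_move emeasure_distr_point_map_singleton[OF \<xi>] emeasure_distr_point_map_singleton[OF \<eta>]
      emeasure_move_atom_singleton[OF \<eta> \<open>z \<noteq> a\<close> \<open>z \<noteq> b\<close>] by simp
qed

lemma Phi_finite_support_step:
  assumes \<eta>: "\<eta> \<in> W1" and S: "finite S" "emeasure \<eta> (- S) = 0" "3 \<le> card S"
    and IH: "\<And>\<xi> a. a \<in> S \<Longrightarrow> \<xi> \<in> W1 \<Longrightarrow> emeasure \<xi> (- (S - {a})) = 0 \<Longrightarrow> \<Phi> \<xi> = distr \<xi> borel point_map"
  shows "\<Phi> \<eta> = distr \<eta> borel point_map"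
proof -
  have "emeasure (distr \<eta> borel point_map) {point_map z} \<le> emeasure (\<Phi> \<eta>) {point_map z}" if "z \<in> S" for z
  proof -
    have "2 \<le> card (S - {z})"
      using S that by simp
    then obtain T where "T \<subseteq> S - {z}" "card T = 2"
      by (rule obtain_subset_with_card_n)
    then obtain a b where ab: "a \<in> S" "b \<in> S" "a \<noteq> b" "z \<noteq> a" "z \<noteq> b"
      by (auto simp: card_2_iff)
    then show ?thesis
      using emeasure_Phi_singleton_ge[OF \<eta> ab(4,5)] IH[OF ab(1) move_atom_in_W1[OF \<eta>]]
        emeasure_move_atom_support[OF \<eta> S(1) ab(1,2,3) S(2)] by blast
  qed
  moreover have "emeasure (distr \<eta> borel point_map) (- point_map ` S) = 0"
  proof -
    have "point_map -` (- point_map ` S) = - S"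
      using isometry_point_map by (auto simp: isometry_def bij_def dest: injD)
    then show ?thesis
      using S W1D[OF \<eta>] by (subst emeasure_distr) (auto simp: borel_closed finite_imp_closed)
  qed
  ultimately have "distr \<eta> borel point_map = \<Phi> \<eta>"
    using distr_point_map_in_W1[OF \<eta>] Phi_in_W1[OF \<eta>] S(1) W1D
    by (intro prob_space_eqI_finite_support[of _ _ "point_map ` S"]) auto
  then show ?thesis ..
qed

lemma Phi_finite_support:
  assumes "\<eta> \<in> W1" "finite S" "emeasure \<eta> (- S) = 0"
  shows "\<Phi> \<eta> = distr \<eta> borel point_map"
  using assms
proof (induction "card S" arbitrary: \<eta> S rule: less_induct)
  case less
  note \<eta> = less.prems(1) and S = less.prems(2,3)
  interpret prob_space \<eta> using W1D[OF \<eta>] by simp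
  consider "card S = 0" | "card S = 1" | "card S = 2" | "3 \<le> card S"
    by linarith
  then show ?case
  proof cases
    case 1
    then show ?thesis
      using S emeasure_space_1 W1D(2)[OF \<eta>] by simp
  next
    case 2
    then obtain x where "S = {x}"
      by (rule card_1_singletonE)
    then have "\<eta> = return borel x"
      using S prob_space_eq_return[OF prob_space_axioms W1D(1)[OF \<eta>]] by simp
    then show ?thesis
      by (simp add: Phi_return distr_return)
  next
    case 3
    then obtain a b where "S = {a, b}" "a \<noteq> b"
      by (auto simp: card_2_iff)
    then show ?thesis
      using Phi_two_point_support[OF \<eta>] S by simp
  next
    case 4
    have "\<Phi> \<xi> = distr \<xi> borel point_map"
      if "a \<in> S" "\<xi> \<in> W1" "emeasure \<xi> (- (S - {a})) = 0" for \<xi> a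
    proof -
      have "card (S - {a}) < card S" "finite (S - {a})"
        using card_Diff1_less[OF S(1) that(1)] S(1) by simp_all
      then show ?thesis
        using less.hyps that(2,3) by blast
    qed
    then show ?thesis
      using Phi_finite_support_step[OF \<eta> S 4] by blast
  qed
qed

lemma integral_lipschitz_Phi:
  fixes f :: "'a \<Rightarrow> real"
  assumes \<mu>: "\<mu> \<in> W1" and f: "1-lipschitz_on UNIV f"
  shows "(\<integral>x. f x \<partial>\<Phi> \<mu>) = (\<integral>x. f x \<partial>distr \<mu> borel point_map)"
proof -
  have [measurable]: "f \<in> borel_measurable borel"
    using borel_measurable_lipschitz[OF f] .
  have f_point_map: "1-lipschitz_on UNIV (\<lambda>x. f (point_map x))"
  proof (rule lipschitz_onI)
    fix x y
    show "dist (f (point_map x)) (f (point_map y)) \<le> 1 * dist x y"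
      using lipschitz_onD[OF f, of "point_map x" "point_map y"] by (simp add: dist_point_map)
  qed simp
  have bound: "\<bar>(\<integral>x. f x \<partial>\<Phi> \<mu>) - (\<integral>x. f x \<partial>distr \<mu> borel point_map)\<bar> \<le> 2 * e" if "0 < e" for e
  proof -
    obtain \<eta> S where \<eta>: "\<eta> \<in> W1" "finite S" "emeasure \<eta> (- S) = 0" and "W1_dist \<mu> \<eta> \<le> ennreal e"
      using W1_finite_support_approx[OF \<mu> \<open>0 < e\<close>] by blast
    then have "ennreal \<bar>(\<integral>x. f x \<partial>\<Phi> \<mu>) - (\<integral>x. f x \<partial>\<Phi> \<eta>)\<bar> \<le> ennreal e"
      "ennreal \<bar>(\<integral>x. f (point_map x) \<partial>\<mu>) - (\<integral>x. f (point_map x) \<partial>\<eta>)\<bar> \<le> ennreal e"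
      using abs_integral_lipschitz_diff_le_W1_dist[OF Phi_in_W1[OF \<mu>] Phi_in_W1[OF \<eta>(1)] f]
        abs_integral_lipschitz_diff_le_W1_dist[OF \<mu> \<eta>(1) f_point_map] W1_dist_Phi[OF \<mu> \<eta>(1)]
      by (auto intro: order_trans)
    moreover have "(\<integral>x. f x \<partial>\<Phi> \<eta>) = (\<integral>x. f (point_map x) \<partial>\<eta>)"
      "(\<integral>x. f x \<partial>distr \<mu> borel point_map) = (\<integral>x. f (point_map x) \<partial>\<mu>)"
      using Phi_finite_support[OF \<eta>] W1D(1)[OF \<eta>(1)] W1D(1)[OF \<mu>]
      by (simp_all add: integral_distr)
    ultimately show ?thesis
      using \<open>0 < e\<close> by (simp add: ennreal_le_iff)
  qed
  have "(\<integral>x. f x \<partial>\<Phi> \<mu>) - (\<integral>x. f x \<partial>distr \<mu> borel point_map) = 0"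
  proof (rule dense_eq0_I)
    fix e :: real
    assume "0 < e"
    then show "\<bar>(\<integral>x. f x \<partial>\<Phi> \<mu>) - (\<integral>x. f x \<partial>distr \<mu> borel point_map)\<bar> \<le> e"
      using bound[of "e / 2"] by simp
  qed
  then show ?thesis
    by simp
qed

lemma Phi_eq_distr_point_map:
  assumes "\<mu> \<in> W1"
  shows "\<Phi> \<mu> = distr \<mu> borel point_map"
  using Phi_in_W1[OF assms] distr_point_map_in_W1[OF assms] integral_lipschitz_Phi[OF assms]
  by (rule measure_eqI_lipschitz)

end

theorem theorem4p6:
  fixes \<Phi> :: "('a::polish_space) measure \<Rightarrow> 'a measure"
  assumes strict_tri: "\<And>x y z::'a. z \<noteq> x \<Longrightarrow> z \<noteq> y \<Longrightarrow> dist x y < dist x z + dist z y"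
    and iso: "W1_isometry \<Phi>"
  shows "\<exists>\<psi>::'a \<Rightarrow> 'a. isometry \<psi> \<and> (\<forall>\<mu>\<in>W1. \<Phi> \<mu> = distr \<mu> borel \<psi>)"
proof -
  interpret W1_isometry_strict_triangle \<Phi>
    using strict_tri iso by unfold_locales
  show ?thesis
    using isometry_point_map Phi_eq_distr_point_map by blast
qed

end
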